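(* Let $\otimes$ be a functorial tensor product of finite-dimensional abstract operator systems. Then there exist an index set $I$ and, for $i\in I$, abstract operator systems $\mathcal D_i$ on $V_i$ and $\mathcal E_i$ on $W_i$, integers $n_i\in\mathbb N$ and elements $x_i\in\pm\big(\mathcal D_i(1)\otimes_{\max}\mathcal E_i(1)\otimes_{\max}{\rm Psd}_{n_i}(\mathbb C)\big)$, such that for all abstract operator systems $\mathcal G$ on $X$, $\mathcal H$ on $Y$, all $n\in\mathbb N$ and all $a\in X\otimes Y\otimes{\rm Her}_n(\mathbb C)$: $$a\in(\mathcal G\otimes\mathcal H)(n)\iff\forall i\in I:\ x_i\otimes a\in(\mathcal D_i\otimes_{\min}\mathcal G)(1)\otimes_{\max}(\mathcal E_i\otimes_{\min}\mathcal H)(1)\otimes_{\max}{\rm Psd}_{n_in}(\mathbb C).$$ Moreover, for such data with $x_i\in(\mathcal D_i\otimes_{\max}\mathcal E_i)(n_i)$ for all $i$, the cones defined by the right-hand side contain $(\mathcal G\otimes_{\min}\mathcal H)(n)$.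
   Context: ${\rm Her}_n(\mathbb C)$: Hermitian $n\times n$ matrices; ${\rm Psd}_n(\mathbb C)$: positive semidefinite ones. An abstract operator system on a finite-dimensional real vector space $X$ is a family of closed convex cones $\mathcal G(n)\subseteq X\otimes{\rm Her}_n(\mathbb C)$, $n\geqslant1$, with $({\rm id}_X\otimes(A\mapsto V^*AV))(\mathcal G(n))\subseteq\mathcal G(m)$ for all $V\in\mathbb C^{n\times m}$, such that $\mathcal G(1)\subseteq X$ is proper (closed, convex, sharp, nonempty interior). Completely positive maps $\psi\colon X\to Y$: $(\psi\otimes{\rm id})(\mathcal G(n))\subseteq\mathcal H(n)$ for all $n$. Dual: $\mathcal G^\vee(n)=\mathcal G(n)^\vee\subseteq X'\otimes{\rm Her}_n(\mathbb C)$ w.r.t. $\langle x\otimes A,\ell\otimes B\rangle=\ell(x){\rm tr}(AB^T)$. $(\mathcal G\otimes_{\min}\mathcal H)(n)$ is the closed convex cone generated by all $({\rm id}\otimes(C\mapsto V^*CV))(\tau(g\otimes h))$, $g\in\mathcal G(k)$, $h\in\mathcal H(l)$, $V\in\mathbb C^{kl\times n}$, with $\tau$ the reordering into $X\otimes Y\otimes{\rm Her}_{kl}(\mathbb C)$ via Kronecker products; $\mathcal G\otimes_{\max}\mathcal H\coloneqq(\mathcal G^\vee\otimes_{\min}\mathcal H^\vee)^\vee$. For closed convex cones $K_j\subseteq U_j$, $K_1\otimes_{\max}\cdots\otimes_{\max}K_r=\{z\mid(\ell_1\otimes\cdots\otimes\ell_r)(z)\geqslant0\ \forall\ell_j\in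 K_j^\vee\}$, and $\pm K$ means $K\cup(-K)$. A functorial tensor product assigns to any two abstract operator systems $\mathcal G$ on $X$, $\mathcal H$ on $Y$ an abstract operator system $\mathcal G\otimes\mathcal H$ on $X\otimes Y$ such that $\varphi\otimes\psi$ is completely positive from $\mathcal G_1\otimes\mathcal H_1$ to $\mathcal G_2\otimes\mathcal H_2$ whenever $\varphi,\psi$ are completely positive. In the display, $x_i\otimes a\in V_i\otimes W_i\otimes{\rm Her}_{n_i}\otimes X\otimes Y\otimes{\rm Her}_n$ is regarded, after reordering and the Kronecker identification ${\rm Her}_{n_i}\otimes{\rm Her}_n={\rm Her}_{n_in}$, as an element of $(V_i\otimes X)\otimes(W_i\otimes Y)\otimes{\rm Her}_{n_in}(\mathbb C)$. *)

theory Defs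
  imports Complex_Main
begin

text \<open>A finite-dimensional real vector space X is modelled as R^d.
An element of R^d (x) Her_n(C) is a function z with z k i j the (i,j) entry of the
k-th Hermitian matrix component (k < d, i,j < n), and zero outside this range.
Tensor products of coordinate spaces use the Kronecker index k1*e + k2, and
Her_k (x) Her_l = Her_(kl) uses the Kronecker index i1*l + i2.\<close>

type_synonym elt = "nat \<Rightarrow> nat \<Rightarrow> nat \<Rightarrow> complex"
type_synonym osys = "nat \<Rightarrow> elt set"

definition carrier :: "nat \<Rightarrow> nat \<Rightarrow> elt set" where
  "carrier d n = {z. (\<forall>k i j. (d \<le> k \<or> n \<le> i \<or> n \<le> j) \<longrightarrow> z k i j = 0)
                    \<and> (\<forall>k i j. z k j i = cnj (z k i j))}"

definition zzero :: elt where "zzero = (\<lambda>k i j. 0)"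
definition zadd :: "elt \<Rightarrow> elt \<Rightarrow> elt" where "zadd z w = (\<lambda>k i j. z k i j + w k i j)"
definition zscale :: "real \<Rightarrow> elt \<Rightarrow> elt" where "zscale r z = (\<lambda>k i j. complex_of_real r * z k i j)"
definition zneg :: "elt \<Rightarrow> elt" where "zneg z = (\<lambda>k i j. - z k i j)"

definition cvx_cone :: "elt set \<Rightarrow> bool" where
  "cvx_cone K \<longleftrightarrow> K \<noteq> {} \<and> (\<forall>x\<in>K. \<forall>y\<in>K. zadd x y \<in> K)
                    \<and> (\<forall>x\<in>K. \<forall>r::real. r \<ge> 0 \<longrightarrow> zscale r x \<in> K)"

text \<open>Closedness (the sets considered live in a finite-dimensional carrier, where
pointwise convergence of all coordinates is the usual convergence).\<close>
definition seq_closed :: "elt set \<Rightarrow> bool" where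
  "seq_closed K \<longleftrightarrow> (\<forall>s z. (\<forall>m. s m \<in> K) \<longrightarrow> (\<forall>k i j. (\<lambda>m. s m k i j) \<longlonglongrightarrow> z k i j) \<longrightarrow> z \<in> K)"

definition proper_cone :: "nat \<Rightarrow> elt set \<Rightarrow> bool" where
  "proper_cone d K \<longleftrightarrow> K \<subseteq> carrier d 1 \<and> cvx_cone K \<and> seq_closed K
     \<and> (\<forall>z\<in>K. zneg z \<in> K \<longrightarrow> z = zzero)
     \<and> (\<exists>z\<in>K. \<exists>e>0. \<forall>w\<in>carrier d 1. (\<Sum>k<d. cmod (w k 0 0 - z k 0 0)) < e \<longrightarrow> w \<in> K)"

definition compress :: "nat \<Rightarrow> nat \<Rightarrow> (nat \<Rightarrow> nat \<Rightarrow> complex) \<Rightarrow> elt \<Rightarrow> elt" where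
  "compress n m V z = (\<lambda>k i j. if i < m \<and> j < m then
      (\<Sum>p<n. \<Sum>q<n. cnj (V p i) * z k p q * V q j) else 0)"

definition aos :: "nat \<Rightarrow> osys \<Rightarrow> bool" where
  "aos d G \<longleftrightarrow> (\<forall>n\<ge>1. G n \<subseteq> carrier d n \<and> cvx_cone (G n) \<and> seq_closed (G n))
     \<and> (\<forall>n\<ge>1. \<forall>m\<ge>1. \<forall>V. \<forall>z\<in>G n. compress n m V z \<in> G m)
     \<and> proper_cone d (G 1)"

definition lin_apply :: "nat \<Rightarrow> nat \<Rightarrow> (nat \<Rightarrow> nat \<Rightarrow> real) \<Rightarrow> elt \<Rightarrow> elt" where
  "lin_apply d1 d2 M z = (\<lambda>k i j. if k < d2 then (\<Sum>l<d1. complex_of_real (M k l) * z l i j) else 0)"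

definition cp_map :: "nat \<Rightarrow> osys \<Rightarrow> nat \<Rightarrow> osys \<Rightarrow> (nat \<Rightarrow> nat \<Rightarrow> real) \<Rightarrow> bool" where
  "cp_map d1 G d2 H M \<longleftrightarrow> (\<forall>n\<ge>1. \<forall>z\<in>G n. lin_apply d1 d2 M z \<in> H n)"

definition kron_lin :: "nat \<Rightarrow> nat \<Rightarrow> (nat \<Rightarrow> nat \<Rightarrow> real) \<Rightarrow> (nat \<Rightarrow> nat \<Rightarrow> real) \<Rightarrow> (nat \<Rightarrow> nat \<Rightarrow> real)" where
  "kron_lin e1 e2 M N = (\<lambda>c' c. M (c' div e2) (c div e1) * N (c' mod e2) (c mod e1))"

definition functorial_tp :: "(nat \<Rightarrow> osys \<Rightarrow> nat \<Rightarrow> osys \<Rightarrow> osys) \<Rightarrow> bool" where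
  "functorial_tp T \<longleftrightarrow>
     (\<forall>d G e H. aos d G \<longrightarrow> aos e H \<longrightarrow> aos (d * e) (T d G e H))
   \<and> (\<forall>d1 G1 d2 G2 e1 H1 e2 H2 M N. aos d1 G1 \<longrightarrow> aos d2 G2 \<longrightarrow> aos e1 H1 \<longrightarrow> aos e2 H2 \<longrightarrow>
        cp_map d1 G1 d2 G2 M \<longrightarrow> cp_map e1 H1 e2 H2 N \<longrightarrow>
        cp_map (d1 * e1) (T d1 G1 e1 H1) (d2 * e2) (T d2 G2 e2 H2) (kron_lin e1 e2 M N))"

text \<open>Pairing <x (x) A, l (x) B> = l(x) tr(A B^T).\<close>
definition pair :: "nat \<Rightarrow> nat \<Rightarrow> elt \<Rightarrow> elt \<Rightarrow> real" where
  "pair d n z w = Re (\<Sum>k<d. \<Sum>i<n. \<Sum>j<n. z k i j * w k i j)"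

definition dual_cone :: "nat \<Rightarrow> nat \<Rightarrow> elt set \<Rightarrow> elt set" where
  "dual_cone d n K = {w \<in> carrier d n. \<forall>z\<in>K. pair d n z w \<ge> 0}"

definition dual_sys :: "nat \<Rightarrow> osys \<Rightarrow> osys" where
  "dual_sys d G = (\<lambda>n. dual_cone d n (G n))"

definition cc_hull :: "nat \<Rightarrow> nat \<Rightarrow> elt set \<Rightarrow> elt set" where
  "cc_hull d n S = \<Inter>{K. K \<subseteq> carrier d n \<and> cvx_cone K \<and> seq_closed K \<and> S \<subseteq> K}"

text \<open>tau(g (x) h) in (X (x) Y) (x) Her_(kl), Kronecker identifications.\<close>
definition tau :: "nat \<Rightarrow> nat \<Rightarrow> nat \<Rightarrow> nat \<Rightarrow> elt \<Rightarrow> elt \<Rightarrow> elt" where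
  "tau d e k l g h = (\<lambda>c r s. if c < d * e \<and> r < k * l \<and> s < k * l then
      g (c div e) (r div l) (s div l) * h (c mod e) (r mod l) (s mod l) else 0)"

definition min_tp :: "nat \<Rightarrow> osys \<Rightarrow> nat \<Rightarrow> osys \<Rightarrow> osys" where
  "min_tp d G e H = (\<lambda>n. cc_hull (d * e) n
      {compress (k * l) n V (tau d e k l g h) | k l g h V. 1 \<le> k \<and> 1 \<le> l \<and> g \<in> G k \<and> h \<in> H l})"

definition max_tp :: "nat \<Rightarrow> osys \<Rightarrow> nat \<Rightarrow> osys \<Rightarrow> osys" where
  "max_tp d G e H = dual_sys (d * e) (min_tp d (dual_sys d G) e (dual_sys e H))"

definition psd :: "nat \<Rightarrow> elt set" where
  "psd m = {z \<in> carrier 1 m. \<forall>v::nat \<Rightarrow> complex.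
              Re (\<Sum>i<m. \<Sum>j<m. cnj (v i) * z 0 i j * v j) \<ge> 0}"

text \<open>K1 (x)max K2 (x)max K3 for K1 in R^d1, K2 in R^d2 (elements with n = 1)
and K3 in Her_m (elements with d = 1).\<close>
definition trip_eval :: "nat \<Rightarrow> nat \<Rightarrow> nat \<Rightarrow> elt \<Rightarrow> elt \<Rightarrow> elt \<Rightarrow> elt \<Rightarrow> real" where
  "trip_eval d1 d2 m l1 l2 l3 z = Re (\<Sum>k1<d1. \<Sum>k2<d2. \<Sum>i<m. \<Sum>j<m.
      l1 k1 0 0 * l2 k2 0 0 * l3 0 i j * z (k1 * d2 + k2) i j)"

definition cmax3 :: "nat \<Rightarrow> elt set \<Rightarrow> nat \<Rightarrow> elt set \<Rightarrow> nat \<Rightarrow> elt set \<Rightarrow> elt set" where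
  "cmax3 d1 K1 d2 K2 m K3 = {z \<in> carrier (d1 * d2) m.
      \<forall>l1\<in>dual_cone d1 1 K1. \<forall>l2\<in>dual_cone d2 1 K2. \<forall>l3\<in>dual_cone 1 m K3.
        trip_eval d1 d2 m l1 l2 l3 z \<ge> 0}"

definition pm :: "elt set \<Rightarrow> elt set" where
  "pm K = K \<union> zneg ` K"

text \<open>x (x) a, with x in V (x) W (x) Her_ni and a in X (x) Y (x) Her_n, regarded as an
element of (V (x) X) (x) (W (x) Y) (x) Her_(ni n).\<close>
definition xa_tensor :: "nat \<Rightarrow> nat \<Rightarrow> nat \<Rightarrow> elt \<Rightarrow> nat \<Rightarrow> nat \<Rightarrow> nat \<Rightarrow> elt \<Rightarrow> elt" where
  "xa_tensor dv dw ni x dx dy n a = (\<lambda>c r s.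
     if c < (dv * dx) * (dw * dy) \<and> r < ni * n \<and> s < ni * n then
       (let p = c div (dw * dy); q = c mod (dw * dy);
            kv = p div dx; kx = p mod dx; kw = q div dy; ky = q mod dy
        in x (kv * dw + kw) (r div n) (s div n) * a (kx * dy + ky) (r mod n) (s mod n))
     else 0)"

end

theory Submission
  imports Defs "HOL-Analysis.Analysis"
begin

text \<open>The index set consists of all \<open>(G\<^sup>\<or>, H\<^sup>\<or>, n, w)\<close> with \<open>w\<close> in the dual of
  \<open>(G \<otimes> H)(n)\<close>; the dual systems are again abstract operator systems because the dual of a
  closed sharp cone contains a functional dominating the \<open>\<ell>\<^sup>1\<close>-norm. Functoriality along the
  maps \<open>\<real> \<rightarrow> G\<close>, \<open>\<real> \<rightarrow> H\<close> that pick out elements of \<open>G(1)\<close>, \<open>H(1)\<close> shows that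
  \<open>\<epsilon> w \<in> G\<^sup>\<or>(1) \<otimes>\<^sub>m\<^sub>a\<^sub>x H\<^sup>\<or>(1) \<otimes>\<^sub>m\<^sub>a\<^sub>x Psd\<^sub>n\<close>, where \<open>\<epsilon> = \<plusminus>1\<close> is the sign of the half-line \<open>(\<real> \<otimes> \<real>)(1)\<close>.

  Evaluating \<open>x \<otimes> a\<close> on a product functional \<open>l\<^sub>1 \<otimes> l\<^sub>2 \<otimes> l\<^sub>3\<close> gives \<open>l\<^sub>3\<close> of the contraction
  \<open>\<Sum>\<^sub>c x\<^sub>c \<otimes> b\<^sub>c\<close>, where \<open>b\<close> is the image of \<open>a\<close> under the maps induced by \<open>l\<^sub>1\<close> and \<open>l\<^sub>2\<close>.
  These maps are completely positive into \<open>G, H\<close> (for the characterisation), respectively into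
  \<open>D\<^sup>\<or>, E\<^sup>\<or>\<close> (for the inclusion of the minimal tensor product), so \<open>b\<close> lies in a cone
  whose compressions pair nonnegatively with \<open>x\<close>, and the contraction is positive
  semidefinite. Conversely, a point \<open>a \<notin> (G \<otimes> H)(n)\<close> is separated by some \<open>w\<close>, and
  evaluating \<open>w \<otimes> a\<close> on the identity and maximally entangled functionals yields
  \<open>\<langle>a, w\<rangle> < 0\<close>.\<close>

definition zsub :: "elt \<Rightarrow> elt \<Rightarrow> elt" where
  "zsub z w = (\<lambda>k i j. z k i j - w k i j)"

definition zcnj :: "elt \<Rightarrow> elt" where
  "zcnj z = (\<lambda>k i j. cnj (z k i j))"

text \<open>The Euclidean inner product of the real vector space \<open>\<real>\<^sup>d \<otimes> Her\<^sub>n\<close>; the duality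
  pairing \<^const>\<open>pair\<close> is bilinear instead, so the two differ by an entrywise conjugation.\<close>
definition zinner :: "nat \<Rightarrow> nat \<Rightarrow> elt \<Rightarrow> elt \<Rightarrow> real" where
  "zinner d n z w = (\<Sum>k<d. \<Sum>i<n. \<Sum>j<n. Re (z k i j * cnj (w k i j)))"

definition coord_tendsto :: "(nat \<Rightarrow> elt) \<Rightarrow> elt \<Rightarrow> bool" where
  "coord_tendsto s z \<longleftrightarrow> (\<forall>k i j. (\<lambda>m. s m k i j) \<longlonglongrightarrow> z k i j)"

lemma carrierI:
  assumes "\<And>k i j. \<not> (k < d \<and> i < n \<and> j < n) \<Longrightarrow> z k i j = 0"
    and "\<And>k i j. z k j i = cnj (z k i j)"
  shows "z \<in> carrier d n"
  using assms unfolding carrier_def not_less[symmetric] by blast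

lemma carrier_outside:
  "z \<in> carrier d n \<Longrightarrow> \<not> (k < d \<and> i < n \<and> j < n) \<Longrightarrow> z k i j = 0"
  unfolding carrier_def not_less[symmetric] by blast

lemma carrier_cnj: "z \<in> carrier d n \<Longrightarrow> z k j i = cnj (z k i j)"
  unfolding carrier_def by blast

lemma carrier_diag_real: "l \<in> carrier d n \<Longrightarrow> complex_of_real (Re (l k i i)) = l k i i"
  by (metis Reals_cnj_iff carrier_cnj of_real_Re)

lemma carrier_eqI:
  assumes "z \<in> carrier d n" "w \<in> carrier d n"
    and "\<And>k i j. k < d \<Longrightarrow> i < n \<Longrightarrow> j < n \<Longrightarrow> z k i j = w k i j"
  shows "z = w"
proof (intro ext)
  fix k i j
  show "z k i j = w k i j"
    using assms carrier_outside[OF assms(1)] carrier_outside[OF assms(2)]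
    by (cases "k < d \<and> i < n \<and> j < n") auto
qed

lemma zzero_carrier: "zzero \<in> carrier d n"
  by (rule carrierI) (simp_all add: zzero_def)

lemma zadd_carrier: "z \<in> carrier d n \<Longrightarrow> w \<in> carrier d n \<Longrightarrow> zadd z w \<in> carrier d n"
  by (rule carrierI) (auto simp: zadd_def carrier_outside, metis carrier_cnj complex_cnj_add)

lemma zsub_carrier: "z \<in> carrier d n \<Longrightarrow> w \<in> carrier d n \<Longrightarrow> zsub z w \<in> carrier d n"
  by (rule carrierI) (auto simp: zsub_def carrier_outside, metis carrier_cnj complex_cnj_diff)

lemma zscale_carrier: "z \<in> carrier d n \<Longrightarrow> zscale r z \<in> carrier d n"
  by (rule carrierI) (auto simp: zscale_def carrier_outside, metis carrier_cnj complex_cnj_mult complex_cnj_complex_of_real)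

lemma zcnj_carrier: "z \<in> carrier d n \<Longrightarrow> zcnj z \<in> carrier d n"
  by (rule carrierI) (auto simp: zcnj_def carrier_outside, metis carrier_cnj complex_cnj_cnj)

lemma carrier_sum:
  assumes "\<And>A. A \<in> F \<Longrightarrow> f A \<in> carrier d n"
  shows "(\<lambda>k i j. \<Sum>A\<in>F. f A k i j) \<in> carrier d n"
proof (rule carrierI)
  fix k i j assume "\<not> (k < d \<and> i < n \<and> j < n)"
  then show "(\<Sum>A\<in>F. f A k i j) = 0"
    using assms carrier_outside by (intro sum.neutral) blast
next
  fix k i j show "(\<Sum>A\<in>F. f A k j i) = cnj (\<Sum>A\<in>F. f A k i j)"
    unfolding cnj_sum using assms carrier_cnj by (intro sum.cong refl) blast
qed

lemma zadd_zscale: "zadd (zscale c y) (zscale c k) = zscale c (zadd y k)"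
  by (simp add: zadd_def zscale_def fun_eq_iff distrib_left)

lemma zscale_zero [simp]: "zscale 0 x = zzero"
  by (simp add: zscale_def zzero_def)

lemma pair_zcnj: "pair d n z (zcnj w) = zinner d n z w"
  by (simp add: pair_def zinner_def zcnj_def Re_sum)

lemma pair_commute: "pair d n z w = pair d n w z"
  by (simp add: pair_def mult.commute)

lemma pair_zadd_left: "pair d n (zadd y y') w = pair d n y w + pair d n y' w"
  by (simp add: pair_def zadd_def sum.distrib ring_distribs Re_sum)

lemma pair_zadd_right: "pair d n y (zadd w w') = pair d n y w + pair d n y w'"
  by (simp add: pair_def zadd_def sum.distrib ring_distribs Re_sum)

lemma pair_zsub_right: "pair d n y (zsub u w) = pair d n y u - pair d n y w"
  by (simp add: pair_def zsub_def ring_distribs sum_subtractf Re_sum)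

lemma pair_zscale_left: "pair d n (zscale t y) w = t * pair d n y w"
  by (simp add: pair_def zscale_def sum_distrib_left mult.assoc Re_sum)

lemma pair_zscale_right: "pair d n y (zscale t w) = t * pair d n y w"
  by (simp add: pair_def zscale_def sum_distrib_left mult.left_commute Re_sum)

lemma pair_zneg_right: "pair d n y (zneg w) = - pair d n y w"
  by (simp add: pair_def zneg_def sum_negf Re_sum)

lemma pair_zzero_left [simp]: "pair d n zzero w = 0"
  by (simp add: pair_def zzero_def)

lemma pair_one_dim: "pair 1 m z w = Re (\<Sum>i<m. \<Sum>j<m. z 0 i j * w 0 i j)"
  by (simp add: pair_def)

lemma pair_zzero_right [simp]: "pair d n w zzero = 0"
  by (simp add: pair_def zzero_def)

lemma pair_sum_right:
  "pair d n y (\<lambda>k i j. \<Sum>A\<in>F. f A k i j) = (\<Sum>A\<in>F. pair d n y (f A))"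
proof -
  have "(\<Sum>k<d. \<Sum>i<n. \<Sum>j<n. \<Sum>A\<in>F. y k i j * f A k i j)
      = (\<Sum>A\<in>F. \<Sum>k<d. \<Sum>i<n. \<Sum>j<n. y k i j * f A k i j)"
    by (subst sum.swap, subst (2) sum.swap, subst (3) sum.swap) (rule refl)
  then show ?thesis
    by (simp add: pair_def sum_distrib_left Re_sum)
qed

lemma zinner_commute: "zinner d n z w = zinner d n w z"
  unfolding zinner_def by (intro sum.cong refl) (simp add: algebra_simps)

lemma zinner_zsub_left: "zinner d n (zsub a b) c = zinner d n a c - zinner d n b c"
  unfolding zinner_def zsub_def by (simp add: sum_subtractf algebra_simps)

lemma zinner_zsub_right: "zinner d n c (zsub a b) = zinner d n c a - zinner d n c b"
  using zinner_zsub_left zinner_commute by metis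

lemma Re_mult_cnj: "Re (z * cnj z) = (cmod z)\<^sup>2"
  using cmod_power2[of z] by (simp add: power2_eq_square)

lemma zinner_self_nonneg: "0 \<le> zinner d n z z"
  unfolding zinner_def by (intro sum_nonneg) (simp add: Re_mult_cnj)

lemma cmod_sq_le_zinner:
  assumes "k < d" "i < n" "j < n"
  shows "(cmod (z k i j))\<^sup>2 \<le> zinner d n z z"
proof -
  let ?q = "\<lambda>k i j. (cmod (z k i j))\<^sup>2"
  have "?q k i j \<le> (\<Sum>j<n. ?q k i j)"
    using assms by (intro member_le_sum) auto
  also have "\<dots> \<le> (\<Sum>i<n. \<Sum>j<n. ?q k i j)"
    using assms by (intro member_le_sum[where f = "\<lambda>i. \<Sum>j<n. ?q k i j"] sum_nonneg) auto
  also have "\<dots> \<le> (\<Sum>k<d. \<Sum>i<n. \<Sum>j<n. ?q k i j)"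
    using assms by (intro member_le_sum[where f = "\<lambda>k. \<Sum>i<n. \<Sum>j<n. ?q k i j"] sum_nonneg) auto
  finally show ?thesis
    by (simp only: zinner_def Re_mult_cnj)
qed

lemma zinner_self_eq_0:
  assumes "zinner d n z z = 0" "z \<in> carrier d n"
  shows "z = zzero"
  using cmod_sq_le_zinner[of _ d _ n _ z] assms
  by (intro carrier_eqI[OF assms(2) zzero_carrier]) (simp add: zzero_def)

lemma zinner_parallelogram:
  fixes x y p :: elt
  defines "mid \<equiv> zadd (zscale (1/2) x) (zscale (1/2) y)"
  shows "zinner d n (zsub x y) (zsub x y) = 2 * zinner d n (zsub x p) (zsub x p)
    + 2 * zinner d n (zsub y p) (zsub y p) - 4 * zinner d n (zsub mid p) (zsub mid p)"
proof -
  have entrywise: "Re ((x k i j - y k i j) * cnj (x k i j - y k i j))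
     = 2 * Re ((x k i j - p k i j) * cnj (x k i j - p k i j))
     + 2 * Re ((y k i j - p k i j) * cnj (y k i j - p k i j))
     - 4 * Re ((complex_of_real (1/2) * x k i j + complex_of_real (1/2) * y k i j - p k i j)
               * cnj (complex_of_real (1/2) * x k i j + complex_of_real (1/2) * y k i j - p k i j))"
    for k i j
    by (simp add: algebra_simps power2_eq_square) (simp add: field_simps)
  show ?thesis
    unfolding zinner_def zsub_def zadd_def zscale_def mid_def
    by (simp only: entrywise sum.distrib sum_subtractf sum_distrib_left)
qed

lemma zinner_segment:
  fixes y a q :: elt and t :: real
  defines "c \<equiv> zadd (zscale t y) (zscale (1 - t) a)"
  shows "zinner d n (zsub c q) (zsub c q) = zinner d n (zsub a q) (zsub a q)
    + 2 * t * zinner d n (zsub a q) (zsub y a) + t\<^sup>2 * zinner d n (zsub y a) (zsub y a)"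
proof -
  have entrywise: "Re ((complex_of_real t * y k i j + complex_of_real (1 - t) * a k i j - q k i j)
            * cnj (complex_of_real t * y k i j + complex_of_real (1 - t) * a k i j - q k i j))
     = Re ((a k i j - q k i j) * cnj (a k i j - q k i j))
     + 2 * t * Re ((a k i j - q k i j) * cnj (y k i j - a k i j))
     + t\<^sup>2 * Re ((y k i j - a k i j) * cnj (y k i j - a k i j))"
    for k i j
    by (simp add: algebra_simps power2_eq_square)
  show ?thesis
    unfolding zinner_def zsub_def zadd_def zscale_def c_def
    by (simp only: entrywise sum.distrib sum_subtractf sum_distrib_left)
qed

lemma coord_tendsto_const: "coord_tendsto (\<lambda>m. z) z"
  unfolding coord_tendsto_def by auto

lemma coord_tendsto_zadd:
  "coord_tendsto s z \<Longrightarrow> coord_tendsto t y \<Longrightarrow> coord_tendsto (\<lambda>m. zadd (s m) (t m)) (zadd z y)"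
  unfolding coord_tendsto_def zadd_def by (auto intro!: tendsto_intros)

lemma coord_tendsto_zsub:
  "coord_tendsto s z \<Longrightarrow> coord_tendsto t y \<Longrightarrow> coord_tendsto (\<lambda>m. zsub (s m) (t m)) (zsub z y)"
  unfolding coord_tendsto_def zsub_def by (auto intro!: tendsto_intros)

lemma coord_tendsto_zscale:
  "coord_tendsto s z \<Longrightarrow> coord_tendsto (\<lambda>m. zscale r (s m)) (zscale r z)"
  unfolding coord_tendsto_def zscale_def by (auto intro!: tendsto_intros)

lemma coord_tendsto_subseq:
  assumes "coord_tendsto s z" "strict_mono r"
  shows "coord_tendsto (s \<circ> r) z"
  unfolding coord_tendsto_def
proof (intro allI)
  fix k i j
  show "(\<lambda>m. (s \<circ> r) m k i j) \<longlonglongrightarrow> z k i j"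
    using LIMSEQ_subseq_LIMSEQ[OF _ assms(2), of "\<lambda>m. s m k i j"] assms(1)
    by (simp add: coord_tendsto_def o_def)
qed

lemma tendsto_zinner:
  "coord_tendsto s z \<Longrightarrow> coord_tendsto t y \<Longrightarrow> (\<lambda>m. zinner d n (s m) (t m)) \<longlonglongrightarrow> zinner d n z y"
  unfolding zinner_def coord_tendsto_def by (auto intro!: tendsto_intros)

lemma tendsto_pair:
  "coord_tendsto s z \<Longrightarrow> coord_tendsto t y \<Longrightarrow> (\<lambda>m. pair d n (s m) (t m)) \<longlonglongrightarrow> pair d n z y"
  unfolding pair_def coord_tendsto_def by (auto intro!: tendsto_intros)

lemma seq_closed_coord_tendsto: "seq_closed K \<Longrightarrow> (\<And>m. s m \<in> K) \<Longrightarrow> coord_tendsto s z \<Longrightarrow> z \<in> K"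
  unfolding seq_closed_def coord_tendsto_def by blast

lemma seq_closedI: "(\<And>s z. (\<And>m. s m \<in> K) \<Longrightarrow> coord_tendsto s z \<Longrightarrow> z \<in> K) \<Longrightarrow> seq_closed K"
  unfolding seq_closed_def coord_tendsto_def by blast

lemma carrier_seq_closed: "seq_closed (carrier d n)"
proof (rule seq_closedI)
  fix s z assume s: "\<And>m. s m \<in> carrier d n" and lim: "coord_tendsto s z"
  show "z \<in> carrier d n"
  proof (rule carrierI)
    fix k i j assume "\<not> (k < d \<and> i < n \<and> j < n)"
    then have "(\<lambda>m. s m k i j) = (\<lambda>m. 0)"
      using s carrier_outside by blast
    then show "z k i j = 0"
      using lim LIMSEQ_unique tendsto_const unfolding coord_tendsto_def by metis
  next
    fix k i j
    have "(\<lambda>m. s m k j i) = (\<lambda>m. cnj (s m k i j))"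
      using s carrier_cnj by blast
    moreover have "(\<lambda>m. cnj (s m k i j)) \<longlonglongrightarrow> cnj (z k i j)"
      using lim unfolding coord_tendsto_def by (auto intro!: tendsto_intros)
    ultimately show "z k j i = cnj (z k i j)"
      using lim unfolding coord_tendsto_def by (metis LIMSEQ_unique)
  qed
qed

lemma finite_family_convergent_subseq:
  fixes f :: "nat \<Rightarrow> 'i \<Rightarrow> complex"
  assumes "finite I" "\<And>m i. i \<in> I \<Longrightarrow> cmod (f m i) \<le> B"
  obtains r where "strict_mono r" "\<And>i. i \<in> I \<Longrightarrow> convergent (\<lambda>m. f (r m) i)"
proof -
  have "\<exists>r. strict_mono r \<and> (\<forall>i\<in>I. convergent (\<lambda>m. f (r m) i))"
    using assms
  proof (induction I rule: finite_induct)
    case empty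
    show ?case by (intro exI[of _ id]) (auto simp: strict_mono_def)
  next
    case (insert i0 I)
    obtain r1 where r1: "strict_mono r1" "\<forall>i\<in>I. convergent (\<lambda>m. f (r1 m) i)"
      using insert by blast
    have "bounded (range (\<lambda>m. f (r1 m) i0))"
      unfolding bounded_iff using insert.prems by auto
    then obtain l r2 where r2: "strict_mono r2" "((\<lambda>m. f (r1 m) i0) \<circ> r2) \<longlonglongrightarrow> l"
      using bounded_imp_convergent_subsequence by blast
    have "convergent (\<lambda>m. f (r1 (r2 m)) i)" if "i \<in> I" for i
      using that r1(2) r2(1) LIMSEQ_subseq_LIMSEQ unfolding convergent_def o_def by blast
    moreover have "convergent (\<lambda>m. f (r1 (r2 m)) i0)"
      using r2(2) by (auto simp: convergent_def o_def)
    moreover have "strict_mono (\<lambda>m. r1 (r2 m))"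
      using strict_mono_o[OF r1(1) r2(1)] by (simp add: o_def)
    ultimately show ?case
      by blast
  qed
  then show ?thesis using that by blast
qed

lemma carrier_bounded_convergent_subseq:
  fixes s :: "nat \<Rightarrow> elt"
  assumes s: "\<And>m. s m \<in> carrier d n" and bound: "\<And>m k i j. cmod (s m k i j) \<le> B"
  obtains r z where "strict_mono r" "coord_tendsto (s \<circ> r) z" "z \<in> carrier d n"
proof -
  let ?I = "{..<d} \<times> {..<n} \<times> {..<n}"
  obtain r where r: "strict_mono r" and conv_I: "\<And>p. p \<in> ?I \<Longrightarrow>
      convergent (\<lambda>m. (\<lambda>m (k, i, j). s m k i j) (r m) p)"
    by (rule finite_family_convergent_subseq[where I = ?I and f = "\<lambda>m (k, i, j). s m k i j" and B = B])
      (simp_all add: case_prod_beta bound)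
  have conv: "convergent (\<lambda>m. s (r m) k i j)" if "k < d \<and> i < n \<and> j < n" for k i j
    using conv_I[of "(k, i, j)"] that by simp
  define z where "z k i j = (if k < d \<and> i < n \<and> j < n then lim (\<lambda>m. s (r m) k i j) else 0)" for k i j
  have "coord_tendsto (s \<circ> r) z"
    unfolding coord_tendsto_def
  proof (intro allI)
    fix k i j
    show "(\<lambda>m. (s \<circ> r) m k i j) \<longlonglongrightarrow> z k i j"
    proof (cases "k < d \<and> i < n \<and> j < n")
      case True
      then show ?thesis
        using conv by (simp add: z_def convergent_LIMSEQ_iff)
    next
      case False
      then have "s (r m) k i j = 0" for m
        using s carrier_outside by blast
      then show ?thesis using False by (simp add: z_def)
    qed
  qed
  moreover have "z \<in> carrier d n"
    using seq_closed_coord_tendsto[OF carrier_seq_closed _ calculation] s by simp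
  ultimately show ?thesis using that r by blast
qed

lemma carrier_bounded_convergent_subseq2:
  fixes s t :: "nat \<Rightarrow> elt"
  assumes s: "\<And>m. s m \<in> carrier d n" "\<And>m k i j. cmod (s m k i j) \<le> B"
    and t: "\<And>m. t m \<in> carrier d n" "\<And>m k i j. cmod (t m k i j) \<le> B"
  obtains r y z where "strict_mono r" "coord_tendsto (s \<circ> r) y" "coord_tendsto (t \<circ> r) z"
    "y \<in> carrier d n" "z \<in> carrier d n"
proof -
  obtain r1 y where r1: "strict_mono r1" and lim_s: "coord_tendsto (s \<circ> r1) y" and y: "y \<in> carrier d n"
    by (rule carrier_bounded_convergent_subseq[OF s])
  have "(t \<circ> r1) m \<in> carrier d n" "cmod ((t \<circ> r1) m k i j) \<le> B" for m k i j
    using t by simp_all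
  then obtain r2 z where r2: "strict_mono r2" and lim_t: "coord_tendsto ((t \<circ> r1) \<circ> r2) z"
    and z: "z \<in> carrier d n"
    by (rule carrier_bounded_convergent_subseq)
  have "coord_tendsto (s \<circ> (r1 \<circ> r2)) y"
    using coord_tendsto_subseq[OF lim_s r2] by (simp add: o_assoc)
  moreover have "coord_tendsto (t \<circ> (r1 \<circ> r2)) z"
    using lim_t by (simp add: o_assoc)
  ultimately show ?thesis
    using that strict_mono_o[OF r1 r2] y z by blast
qed

section \<open>Separation of a point from a convex set\<close>

definition zconvex :: "elt set \<Rightarrow> bool" where
  "zconvex S \<longleftrightarrow> (\<forall>x\<in>S. \<forall>y\<in>S. \<forall>t::real. 0 \<le> t \<and> t \<le> 1 \<longrightarrow> zadd (zscale t x) (zscale (1 - t) y) \<in> S)"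

lemma zconvexD: "zconvex S \<Longrightarrow> x \<in> S \<Longrightarrow> y \<in> S \<Longrightarrow> 0 \<le> t \<Longrightarrow> t \<le> 1 \<Longrightarrow> zadd (zscale t x) (zscale (1 - t) y) \<in> S"
  unfolding zconvex_def by blast

lemma zinner_Cauchy_coord_tendsto:
  fixes s :: "nat \<Rightarrow> elt" and e :: "nat \<Rightarrow> real"
  assumes s: "\<And>m. s m \<in> carrier d n"
    and close: "\<And>m m'. zinner d n (zsub (s m) (s m')) (zsub (s m) (s m')) \<le> e m + e m'"
    and e: "e \<longlonglongrightarrow> 0"
  obtains z where "coord_tendsto s z"
proof -
  have "Cauchy (\<lambda>m. s m k i j)" for k i j
  proof (cases "k < d \<and> i < n \<and> j < n")
    case True
    show ?thesis
    proof (rule CauchyI)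
      fix \<epsilon> :: real assume "0 < \<epsilon>"
      then have "eventually (\<lambda>m. e m < \<epsilon>\<^sup>2 / 2) sequentially"
        by (intro order_tendstoD(2)[OF e]) simp
      then obtain M where M: "\<And>m. M \<le> m \<Longrightarrow> e m < \<epsilon>\<^sup>2 / 2"
        unfolding eventually_sequentially by blast
      have "cmod (s m k i j - s m' k i j) < \<epsilon>" if "M \<le> m" "M \<le> m'" for m m'
      proof -
        have "(cmod (s m k i j - s m' k i j))\<^sup>2 \<le> zinner d n (zsub (s m) (s m')) (zsub (s m) (s m'))"
          using cmod_sq_le_zinner[of k d i n j "zsub (s m) (s m')"] True by (simp add: zsub_def)
        also have "\<dots> < \<epsilon>\<^sup>2"
          using close[of m m'] M[OF that(1)] M[OF that(2)] by linarith
        finally show ?thesis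
          using \<open>0 < \<epsilon>\<close> by (meson power_less_imp_less_base less_imp_le)
      qed
      then show "\<exists>M. \<forall>m\<ge>M. \<forall>m'\<ge>M. cmod (s m k i j - s m' k i j) < \<epsilon>"
        by blast
    qed
  next
    case False
    then have "(\<lambda>m. s m k i j) = (\<lambda>m. 0)"
      using s carrier_outside by blast
    then show ?thesis
      by (simp add: Cauchy_convergent_iff convergent_const)
  qed
  then have "coord_tendsto s (\<lambda>k i j. lim (\<lambda>m. s m k i j))"
    unfolding coord_tendsto_def by (simp add: Cauchy_convergent_iff convergent_LIMSEQ_iff)
  then show ?thesis using that by blast
qed

text \<open>Hilbert projection: minimising sequences are Cauchy by the parallelogram law.\<close>
lemma nearest_point_exists:
  assumes S: "S \<subseteq> carrier d n" "zconvex S" "S \<noteq> {}"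
  obtains s z where "\<And>m. s m \<in> S" "coord_tendsto s z" "z \<in> carrier d n"
    "\<And>y. y \<in> S \<Longrightarrow> zinner d n (zsub z p) (zsub z p) \<le> zinner d n (zsub y p) (zsub y p)"
proof -
  define D where "D y = zinner d n (zsub y p) (zsub y p)" for y
  define \<delta> where "\<delta> = Inf (D ` S)"
  have bdd: "bdd_below (D ` S)"
    using zinner_self_nonneg by (auto simp: D_def intro: bdd_belowI[of _ 0])
  have low: "\<delta> \<le> D y" if "y \<in> S" for y
    unfolding \<delta>_def using bdd that by (intro cInf_lower) auto
  have "\<exists>y\<in>S. D y < \<delta> + 1 / real (Suc m)" for m
    using cInf_lessD[of "D ` S" "\<delta> + 1 / real (Suc m)"] S(3) by (auto simp: \<delta>_def)
  then obtain s where s: "\<And>m. s m \<in> S" and s_min: "\<And>m. D (s m) < \<delta> + 1 / real (Suc m)"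
    by metis
  have mid: "zadd (zscale (1/2) x) (zscale (1/2) y) \<in> S" if "x \<in> S" "y \<in> S" for x y
    using zconvexD[OF S(2) that, of "1/2"] by simp
  have "zinner d n (zsub (s m) (s m')) (zsub (s m) (s m')) \<le> 2 / real (Suc m) + 2 / real (Suc m')"
    for m m'
    using zinner_parallelogram[of d n "s m" "s m'" p] low[OF mid[OF s[of m] s[of m']]]
      s_min[of m] s_min[of m'] unfolding D_def by linarith
  moreover have "(\<lambda>m. 2 / real (Suc m)) \<longlonglongrightarrow> 0"
    using LIMSEQ_Suc[OF lim_const_over_n[of 2]] by simp
  ultimately obtain z where lim: "coord_tendsto s z"
    using zinner_Cauchy_coord_tendsto[of s d n "\<lambda>m. 2 / real (Suc m)"] s S(1) by blast
  have "(\<lambda>m. D (s m)) \<longlonglongrightarrow> D z"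
    unfolding D_def by (intro tendsto_zinner coord_tendsto_zsub lim coord_tendsto_const)
  moreover have "(\<lambda>m. D (s m)) \<longlonglongrightarrow> \<delta>"
  proof (rule real_tendsto_sandwich[of "\<lambda>m. \<delta>" _ _ "\<lambda>m. \<delta> + 1 / real (Suc m)"])
    show "(\<lambda>m. \<delta> + 1 / real (Suc m)) \<longlonglongrightarrow> \<delta>"
      using LIMSEQ_inverse_real_of_nat_add[of \<delta>] by (simp add: divide_inverse)
    show "eventually (\<lambda>m. \<delta> \<le> D (s m)) sequentially"
      using low s by simp
    show "eventually (\<lambda>m. D (s m) \<le> \<delta> + 1 / real (Suc m)) sequentially"
      using s_min by (intro always_eventually allI less_imp_le)
  qed simp
  ultimately have "D z = \<delta>"
    by (rule LIMSEQ_unique)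
  moreover have "z \<in> carrier d n"
    using seq_closed_coord_tendsto[OF carrier_seq_closed _ lim] s S(1) by blast
  ultimately show ?thesis
    using that[OF s lim] low unfolding D_def by blast
qed

lemma nonneg_of_nonneg_perturbation:
  fixes a b :: real
  assumes "\<And>t. 0 < t \<Longrightarrow> t \<le> 1 \<Longrightarrow> 0 \<le> a + t * b"
  shows "0 \<le> a"
proof -
  have "((\<lambda>t. a + t * b) \<longlongrightarrow> a) (at_right 0)"
    by (auto intro!: tendsto_eq_intros)
  moreover have "eventually (\<lambda>t. 0 \<le> a + t * b) (at_right (0::real))"
    unfolding eventually_at_right_field using assms by (intro exI[of _ 1]) auto
  ultimately show ?thesis
    by (rule tendsto_lowerbound) simp
qed

text \<open>The segment from \<open>z\<close> towards \<open>y \<in> S\<close> stays in the closure of \<open>S\<close>, so the distance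
  to \<open>p\<close> cannot decrease to first order along it.\<close>
lemma nearest_point_variational:
  assumes S: "zconvex S" and s: "\<And>m. s m \<in> S" and lim: "coord_tendsto s z"
    and z_min: "\<And>y. y \<in> S \<Longrightarrow> zinner d n (zsub z p) (zsub z p) \<le> zinner d n (zsub y p) (zsub y p)"
    and y: "y \<in> S"
  shows "0 \<le> zinner d n (zsub z p) (zsub y z)"
proof -
  define D where "D x = zinner d n (zsub x p) (zsub x p)" for x
  let ?I = "zinner d n (zsub z p) (zsub y z)" and ?N = "zinner d n (zsub y z) (zsub y z)"
  have "0 \<le> 2 * ?I + t * ?N" if t: "0 < t" "t \<le> 1" for t
  proof -
    let ?c = "\<lambda>x. zadd (zscale t y) (zscale (1 - t) x)"
    have "D z \<le> D (?c (s m))" for m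
      unfolding D_def using t by (intro z_min zconvexD[OF S y s]) auto
    moreover have "(\<lambda>m. D (?c (s m))) \<longlonglongrightarrow> D (?c z)"
      unfolding D_def
      by (intro tendsto_zinner coord_tendsto_zsub coord_tendsto_zadd coord_tendsto_zscale
          lim coord_tendsto_const)
    ultimately have "D z \<le> D (?c z)"
      by (intro LIMSEQ_le_const) auto
    then have "0 \<le> t * (2 * ?I + t * ?N)"
      unfolding D_def zinner_segment by (simp add: power2_eq_square algebra_simps)
    then show ?thesis
      using t by (simp add: zero_le_mult_iff)
  qed
  then show ?thesis
    using nonneg_of_nonneg_perturbation[of "2 * ?I" ?N] by simp
qed

lemma convex_separation:
  assumes S: "S \<subseteq> carrier d n" "zconvex S" "S \<noteq> {}" and p: "p \<in> carrier d n"
    and not_lim: "\<not> (\<exists>s. (\<forall>m. s m \<in> S) \<and> coord_tendsto s p)"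
  obtains w \<delta> where "w \<in> carrier d n" "\<delta> > 0" "\<And>y. y \<in> S \<Longrightarrow> pair d n p w + \<delta> \<le> pair d n y w"
proof -
  obtain s z where s: "\<And>m. s m \<in> S" and lim: "coord_tendsto s z" and z: "z \<in> carrier d n"
    and z_min: "\<And>y. y \<in> S \<Longrightarrow> zinner d n (zsub z p) (zsub z p) \<le> zinner d n (zsub y p) (zsub y p)"
    using nearest_point_exists[OF S] by metis
  define \<delta> where "\<delta> = zinner d n (zsub z p) (zsub z p)"
  define w where "w = zcnj (zsub z p)"
  have "zsub z p \<noteq> zzero"
  proof
    assume "zsub z p = zzero"
    then have "zsub z p k i j = zzero k i j" for k i j
      by simp
    then have "z k i j = p k i j" for k i j
      by (simp add: zsub_def zzero_def)
    then show False
      using not_lim s lim by (metis ext)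
  qed
  then have "\<delta> \<noteq> 0"
    using zinner_self_eq_0[OF _ zsub_carrier[OF z p]] by (auto simp: \<delta>_def)
  then have "\<delta> > 0"
    using zinner_self_nonneg[of d n "zsub z p"] by (simp add: \<delta>_def)
  moreover have "w \<in> carrier d n"
    unfolding w_def by (intro zcnj_carrier zsub_carrier z p)
  moreover have "pair d n p w + \<delta> \<le> pair d n y w" if "y \<in> S" for y
  proof -
    have "pair d n y w - pair d n p w = zinner d n (zsub z p) (zsub y p)"
      by (simp add: w_def pair_zcnj zinner_zsub_left zinner_commute)
    also have "\<dots> = zinner d n (zsub z p) (zsub y z) + \<delta>"
      by (simp add: \<delta>_def zinner_zsub_right)
    finally show ?thesis
      using nearest_point_variational[OF S(2) s lim z_min that] by linarith
  qed
  ultimately show ?thesis using that by blast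
qed

section \<open>Closed convex cones and duality\<close>

lemma cvx_coneI:
  "zzero \<in> K \<Longrightarrow> (\<And>x y. x \<in> K \<Longrightarrow> y \<in> K \<Longrightarrow> zadd x y \<in> K)
   \<Longrightarrow> (\<And>x r. x \<in> K \<Longrightarrow> 0 \<le> r \<Longrightarrow> zscale r x \<in> K) \<Longrightarrow> cvx_cone K"
  unfolding cvx_cone_def by blast

lemma cvx_cone_zzero: "cvx_cone K \<Longrightarrow> zzero \<in> K"
  unfolding cvx_cone_def by (metis all_not_in_conv order_refl zscale_zero)

lemma cvx_cone_zadd: "cvx_cone K \<Longrightarrow> x \<in> K \<Longrightarrow> y \<in> K \<Longrightarrow> zadd x y \<in> K"
  unfolding cvx_cone_def by blast

lemma cvx_cone_zscale: "cvx_cone K \<Longrightarrow> x \<in> K \<Longrightarrow> 0 \<le> r \<Longrightarrow> zscale r x \<in> K"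
  unfolding cvx_cone_def by blast

lemma cvx_cone_zconvex: "cvx_cone K \<Longrightarrow> zconvex K"
  unfolding zconvex_def by (auto intro!: cvx_cone_zadd cvx_cone_zscale)

lemma carrier_cvx_cone: "cvx_cone (carrier d n)"
  by (intro cvx_coneI zzero_carrier zadd_carrier zscale_carrier)

lemma halfspace_cvx_cone: "cvx_cone {z \<in> carrier d n. 0 \<le> pair d n z w}"
  by (intro cvx_coneI)
    (auto simp: zzero_carrier zadd_carrier zscale_carrier pair_zadd_left pair_zscale_left)

lemma halfspace_seq_closed: "seq_closed {z \<in> carrier d n. 0 \<le> pair d n z w}"
proof (rule seq_closedI)
  fix s z assume s: "\<And>m. s m \<in> {z \<in> carrier d n. 0 \<le> pair d n z w}" and lim: "coord_tendsto s z"
  have "z \<in> carrier d n"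
    using seq_closed_coord_tendsto[OF carrier_seq_closed _ lim] s by blast
  moreover have "0 \<le> pair d n z w"
    using s by (intro LIMSEQ_le_const[OF tendsto_pair[OF lim coord_tendsto_const]]) auto
  ultimately show "z \<in> {z \<in> carrier d n. 0 \<le> pair d n z w}" by simp
qed

lemma dual_cone_carrier: "dual_cone d n K \<subseteq> carrier d n"
  unfolding dual_cone_def by auto

lemma dual_cone_nonneg: "w \<in> dual_cone d n K \<Longrightarrow> z \<in> K \<Longrightarrow> 0 \<le> pair d n z w"
  unfolding dual_cone_def by blast

lemma dual_coneI: "w \<in> carrier d n \<Longrightarrow> (\<And>z. z \<in> K \<Longrightarrow> 0 \<le> pair d n z w) \<Longrightarrow> w \<in> dual_cone d n K"
  unfolding dual_cone_def by blast

lemma dual_cone_cvx_cone: "cvx_cone (dual_cone d n K)"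
  unfolding dual_cone_def
  by (intro cvx_coneI) (auto simp: zzero_carrier zadd_carrier zscale_carrier pair_zadd_right pair_zscale_right)

lemma dual_cone_seq_closed: "seq_closed (dual_cone d n K)"
proof (rule seq_closedI)
  fix s w assume s: "\<And>m. s m \<in> dual_cone d n K" and lim: "coord_tendsto s w"
  show "w \<in> dual_cone d n K"
  proof (rule dual_coneI)
    show "w \<in> carrier d n"
      using seq_closed_coord_tendsto[OF carrier_seq_closed _ lim] s dual_cone_carrier by blast
    show "0 \<le> pair d n z w" if "z \<in> K" for z
      using s that dual_cone_nonneg
      by (intro LIMSEQ_le_const[OF tendsto_pair[OF coord_tendsto_const lim]]) blast
  qed
qed

lemma closed_cone_separation:
  assumes K: "K \<subseteq> carrier d n" "cvx_cone K" "seq_closed K" and z: "z \<in> carrier d n" "z \<notin> K"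
  obtains w where "w \<in> dual_cone d n K" "pair d n z w < 0"
proof -
  have not_lim: "\<not> (\<exists>s. (\<forall>m. s m \<in> K) \<and> coord_tendsto s z)"
    using K(3) z(2) seq_closed_coord_tendsto by blast
  obtain w \<delta> where w: "w \<in> carrier d n" "\<delta> > 0" and sep: "\<And>y. y \<in> K \<Longrightarrow> pair d n z w + \<delta> \<le> pair d n y w"
    using convex_separation[OF K(1) cvx_cone_zconvex[OF K(2)] _ z(1) not_lim] cvx_cone_zzero[OF K(2)] by blast
  have neg: "pair d n z w + \<delta> \<le> 0"
    using sep[OF cvx_cone_zzero[OF K(2)]] by simp
  have "0 \<le> pair d n y w" if y: "y \<in> K" for y
  proof (rule ccontr)
    assume "\<not> 0 \<le> pair d n y w"
    then have "pair d n (zscale ((1 - pair d n z w) / - pair d n y w) y) w = pair d n z w - 1"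
      by (simp add: pair_zscale_left)
    moreover have "zscale ((1 - pair d n z w) / - pair d n y w) y \<in> K"
      using \<open>\<not> 0 \<le> pair d n y w\<close> neg w(2)
      by (intro cvx_cone_zscale[OF K(2) y] divide_nonneg_pos) auto
    ultimately show False
      using sep w(2) by fastforce
  qed
  with w(1) have "w \<in> dual_cone d n K"
    by (rule dual_coneI)
  then show ?thesis
    using that neg w(2) by force
qed

lemma dual_cone_dual_cone:
  assumes "K \<subseteq> carrier d n" "cvx_cone K" "seq_closed K"
  shows "dual_cone d n (dual_cone d n K) = K"
proof
  show "dual_cone d n (dual_cone d n K) \<subseteq> K"
  proof
    fix z assume z: "z \<in> dual_cone d n (dual_cone d n K)"
    show "z \<in> K"
    proof (rule ccontr)
      assume "z \<notin> K"
      then obtain w where "w \<in> dual_cone d n K" "pair d n z w < 0"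
        using closed_cone_separation[OF assms] z dual_cone_carrier by blast
      then show False
        using dual_cone_nonneg[OF z] pair_commute by (metis not_le)
    qed
  qed
  show "K \<subseteq> dual_cone d n (dual_cone d n K)"
  proof
    fix z assume "z \<in> K"
    then show "z \<in> dual_cone d n (dual_cone d n K)"
      using assms(1) dual_cone_nonneg pair_commute by (metis dual_coneI subsetD)
  qed
qed

lemma cc_hull_least:
  "K \<subseteq> carrier d n \<Longrightarrow> cvx_cone K \<Longrightarrow> seq_closed K \<Longrightarrow> S \<subseteq> K \<Longrightarrow> cc_hull d n S \<subseteq> K"
  unfolding cc_hull_def by blast

lemma cc_hull_carrier: "S \<subseteq> carrier d n \<Longrightarrow> cc_hull d n S \<subseteq> carrier d n"
  by (intro cc_hull_least carrier_cvx_cone carrier_seq_closed) auto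

lemma cc_hull_superset: "S \<subseteq> cc_hull d n S"
  unfolding cc_hull_def by blast

lemma cc_hull_cvx_cone: "cvx_cone (cc_hull d n S)"
  unfolding cc_hull_def
  by (intro cvx_coneI) (auto intro: cvx_cone_zzero cvx_cone_zadd cvx_cone_zscale)

lemma cc_hull_seq_closed: "seq_closed (cc_hull d n S)"
  unfolding cc_hull_def
  by (intro seq_closedI InterI) (metis (no_types, lifting) InterE mem_Collect_eq seq_closed_coord_tendsto)

definition zlinear_continuous :: "(elt \<Rightarrow> elt) \<Rightarrow> bool" where
  "zlinear_continuous f \<longleftrightarrow>
     (\<forall>x y. f (zadd x y) = zadd (f x) (f y)) \<and> (\<forall>r x. f (zscale r x) = zscale r (f x))
     \<and> (\<forall>s z. coord_tendsto s z \<longrightarrow> coord_tendsto (\<lambda>m. f (s m)) (f z))"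

lemma zlinear_continuousD:
  assumes "zlinear_continuous f"
  shows "f (zadd x y) = zadd (f x) (f y)" "f (zscale r x) = zscale r (f x)" "f zzero = zzero"
    "coord_tendsto s z \<Longrightarrow> coord_tendsto (\<lambda>m. f (s m)) (f z)"
  using assms unfolding zlinear_continuous_def by (metis zscale_zero)+

lemma cc_hull_map_into:
  assumes f: "zlinear_continuous f" and S: "S \<subseteq> carrier d n" and K: "cvx_cone K" "seq_closed K"
    and gen: "\<And>s. s \<in> S \<Longrightarrow> f s \<in> K" and z: "z \<in> cc_hull d n S"
  shows "f z \<in> K"
proof -
  let ?P = "{z \<in> carrier d n. f z \<in> K}"
  have "cvx_cone ?P"
    by (rule cvx_coneI)
      (simp_all add: zlinear_continuousD[OF f] zzero_carrier zadd_carrier zscale_carrier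
        cvx_cone_zzero[OF K(1)] cvx_cone_zadd[OF K(1)] cvx_cone_zscale[OF K(1)])
  moreover have "seq_closed ?P"
  proof (rule seq_closedI)
    fix s z assume s: "\<And>m. s m \<in> ?P" and lim: "coord_tendsto s z"
    have "z \<in> carrier d n"
      using seq_closed_coord_tendsto[OF carrier_seq_closed _ lim] s by blast
    moreover have "f z \<in> K"
      using s by (intro seq_closed_coord_tendsto[OF K(2) _ zlinear_continuousD(4)[OF f lim]]) auto
    ultimately show "z \<in> ?P" by simp
  qed
  ultimately have "cc_hull d n S \<subseteq> ?P"
    using S gen by (intro cc_hull_least) auto
  then show ?thesis using z by auto
qed

lemma cc_hull_halfspace:
  assumes "S \<subseteq> carrier d n" "\<And>s. s \<in> S \<Longrightarrow> 0 \<le> pair d n s w" "z \<in> cc_hull d n S"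
  shows "0 \<le> pair d n z w"
proof -
  have "cc_hull d n S \<subseteq> {z \<in> carrier d n. 0 \<le> pair d n z w}"
    using assms by (intro cc_hull_least halfspace_cvx_cone halfspace_seq_closed) auto
  then show ?thesis using assms(3) by auto
qed

lemma sum_mult_index: "(\<Sum>c<(a::nat) * b. f c) = (\<Sum>i<a. \<Sum>j<b. f (i * b + j))"
proof -
  have "sum f {i * b..<i * b + b} = (\<Sum>j<b. f (i * b + j))" for i
    using sum.shift_bounds_nat_ivl[of f 0 "i * b" b] by (simp add: add.commute atLeast0LessThan)
  then show ?thesis
    by (simp add: sum.nat_group[symmetric])
qed

lemma mult_index_less:
  assumes "(i::nat) < a" "j < b"
  shows "i * b + j < a * b"
proof -
  have "i * b + j < Suc i * b"
    using assms(2) by simp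
  also have "\<dots> \<le> a * b"
    using assms(1) by (intro mult_right_mono) auto
  finally show ?thesis .
qed

lemma sum_swap_outer:
  "(\<Sum>i\<in>A. \<Sum>r\<in>R. \<Sum>s\<in>S. f i r s) = (\<Sum>r\<in>R. \<Sum>s\<in>S. \<Sum>i\<in>A. f i r s)"
  by (subst sum.swap, subst (2) sum.swap) (rule refl)

lemma sum_delta_less: "(i::nat) < k \<Longrightarrow> (\<Sum>j<k. if i = j then f j else 0) = f i"
  by (simp add: sum.delta)

lemma sum_delta_less2:
  assumes "(a::nat) < A" "(b::nat) < B"
  shows "(\<Sum>i<A. \<Sum>j<B. if a = i then (if b = j then f i j else 0) else 0) = f a b"
proof -
  have "(\<Sum>i<A. \<Sum>j<B. if a = i then (if b = j then f i j else 0) else 0)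
     = (\<Sum>i<A. if a = i then (\<Sum>j<B. if b = j then f i j else 0) else 0)"
    by (rule sum.cong[OF refl]) auto
  also have "\<dots> = f a b"
    using assms by (simp add: sum_delta_less)
  finally show ?thesis .
qed

lemma compress_carrier:
  assumes z: "z \<in> carrier d n"
  shows "compress n m V z \<in> carrier d m"
proof (rule carrierI)
  fix k i j assume "\<not> (k < d \<and> i < m \<and> j < m)"
  then show "compress n m V z k i j = 0"
    using carrier_outside[OF z] by (auto simp: compress_def)
next
  fix k i j
  show "compress n m V z k j i = cnj (compress n m V z k i j)"
  proof (cases "i < m \<and> j < m")
    case True
    have "cnj (compress n m V z k i j) = (\<Sum>p<n. \<Sum>q<n. V p i * z k q p * cnj (V q j))"
      using True by (simp add: compress_def cnj_sum carrier_cnj[OF z, symmetric])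
    also have "\<dots> = compress n m V z k j i"
      using True by (subst sum.swap) (simp add: compress_def mult_ac)
    finally show ?thesis by simp
  qed (auto simp: compress_def)
qed

lemma compress_zlinear_continuous: "zlinear_continuous (compress n m V)"
  unfolding zlinear_continuous_def
proof (intro conjI allI impI)
  fix x y show "compress n m V (zadd x y) = zadd (compress n m V x) (compress n m V y)"
    by (auto simp: compress_def zadd_def sum.distrib ring_distribs intro!: ext)
next
  fix r x show "compress n m V (zscale r x) = zscale r (compress n m V x)"
    by (auto simp: compress_def zscale_def sum_distrib_left mult_ac intro!: ext)
next
  fix s z assume "coord_tendsto s z"
  then show "coord_tendsto (\<lambda>l. compress n m V (s l)) (compress n m V z)"
    unfolding coord_tendsto_def compress_def by (auto intro!: tendsto_intros)
qed

lemma compress_compress: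
  "compress n m V (compress p n U z) = compress p m (\<lambda>a b. \<Sum>c<n. U a c * V c b) z"
proof (intro ext)
  fix k i j
  show "compress n m V (compress p n U z) k i j = compress p m (\<lambda>a b. \<Sum>c<n. U a c * V c b) z k i j"
  proof (cases "i < m \<and> j < m")
    case True
    let ?t = "\<lambda>c c' a b. cnj (V c i) * cnj (U a c) * z k a b * U b c' * V c' j"
    have "compress n m V (compress p n U z) k i j = (\<Sum>c<n. \<Sum>c'<n. \<Sum>a<p. \<Sum>b<p. ?t c c' a b)"
      using True by (simp add: compress_def sum_distrib_left sum_distrib_right mult_ac)
    also have "\<dots> = (\<Sum>c<n. \<Sum>a<p. \<Sum>b<p. \<Sum>c'<n. ?t c c' a b)"
      by (rule sum.cong[OF refl], rule sum_swap_outer)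
    also have "\<dots> = (\<Sum>a<p. \<Sum>b<p. \<Sum>c<n. \<Sum>c'<n. ?t c c' a b)"
      by (rule sum_swap_outer)
    also have "\<dots> = compress p m (\<lambda>a b. \<Sum>c<n. U a c * V c b) z k i j"
      using True by (simp add: compress_def sum_distrib_left sum_distrib_right cnj_sum mult_ac)
    finally show ?thesis .
  qed (auto simp: compress_def)
qed

lemma pair_compress_adjoint:
  "pair d m z (compress n m V w) = pair d n (compress m n (\<lambda>i p. V p i) z) w"
proof -
  let ?t = "\<lambda>k i j p q. z k i j * cnj (V p i) * w k p q * V q j"
  have "pair d m z (compress n m V w) = Re (\<Sum>k<d. \<Sum>i<m. \<Sum>j<m. \<Sum>p<n. \<Sum>q<n. ?t k i j p q)"
    by (simp add: pair_def compress_def sum_distrib_left mult_ac)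
  also have "\<dots> = Re (\<Sum>k<d. \<Sum>i<m. \<Sum>p<n. \<Sum>q<n. \<Sum>j<m. ?t k i j p q)"
    by (rule arg_cong[where f = Re], rule sum.cong[OF refl], rule sum.cong[OF refl], rule sum_swap_outer)
  also have "\<dots> = Re (\<Sum>k<d. \<Sum>p<n. \<Sum>q<n. \<Sum>i<m. \<Sum>j<m. ?t k i j p q)"
    by (rule arg_cong[where f = Re], rule sum.cong[OF refl], rule sum_swap_outer)
  also have "\<dots> = pair d n (compress m n (\<lambda>i p. V p i) z) w"
    by (simp add: pair_def compress_def sum_distrib_left sum_distrib_right mult_ac)
  finally show ?thesis .
qed

lemma lin_apply_less:
  "k < d2 \<Longrightarrow> lin_apply d1 d2 M z k i j = (\<Sum>l<d1. complex_of_real (M k l) * z l i j)"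
  by (simp add: lin_apply_def)

lemma lin_apply_carrier:
  assumes z: "z \<in> carrier d1 n"
  shows "lin_apply d1 d2 M z \<in> carrier d2 n"
proof (rule carrierI)
  fix k i j assume "\<not> (k < d2 \<and> i < n \<and> j < n)"
  then show "lin_apply d1 d2 M z k i j = 0"
    using carrier_outside[OF z] by (auto simp: lin_apply_def)
qed (simp add: lin_apply_def cnj_sum carrier_cnj[OF z, symmetric])

lemma lin_apply_zlinear_continuous: "zlinear_continuous (lin_apply d1 d2 M)"
  unfolding zlinear_continuous_def
proof (intro conjI allI impI)
  fix x y show "lin_apply d1 d2 M (zadd x y) = zadd (lin_apply d1 d2 M x) (lin_apply d1 d2 M y)"
    by (auto simp: lin_apply_def zadd_def sum.distrib ring_distribs intro!: ext)
next
  fix r x show "lin_apply d1 d2 M (zscale r x) = zscale r (lin_apply d1 d2 M x)"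
    by (auto simp: lin_apply_def zscale_def sum_distrib_left mult_ac intro!: ext)
next
  fix s z assume "coord_tendsto s z"
  then show "coord_tendsto (\<lambda>m. lin_apply d1 d2 M (s m)) (lin_apply d1 d2 M z)"
    unfolding coord_tendsto_def lin_apply_def by (auto intro!: tendsto_intros)
qed

lemma tau_carrier:
  assumes g: "g \<in> carrier d k" and h: "h \<in> carrier e l"
  shows "tau d e k l g h \<in> carrier (d * e) (k * l)"
  by (rule carrierI) (auto simp: tau_def carrier_cnj[OF g, symmetric] carrier_cnj[OF h, symmetric])

lemma tau_less:
  "a < dx \<Longrightarrow> b < dy \<Longrightarrow> p < k * l \<Longrightarrow> q < k * l \<Longrightarrow>
   tau dx dy k l g h (a * dy + b) p q = g a (p div l) (q div l) * h b (p mod l) (q mod l)"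
  by (simp add: tau_def mult_index_less)

lemma lin_apply_kron_compress_tau:
  "lin_apply (dx * dy) (dv * dw) (kron_lin dy dw M1 M2) (compress (k * l) n V (tau dx dy k l g h))
   = compress (k * l) n V (tau dv dw k l (lin_apply dx dv M1 g) (lin_apply dy dw M2 h))"
proof (intro ext)
  fix c i j
  show "lin_apply (dx * dy) (dv * dw) (kron_lin dy dw M1 M2) (compress (k * l) n V (tau dx dy k l g h)) c i j
    = compress (k * l) n V (tau dv dw k l (lin_apply dx dv M1 g) (lin_apply dy dw M2 h)) c i j"
  proof (cases "c < dv * dw \<and> i < n \<and> j < n")
    case True
    then have c: "c < dv * dw" and ij: "i < n" "j < n" by auto
    have cw: "c mod dw < dw"
      using c by (metis mod_less_divisor mult_zero_right neq0_conv not_less0)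
    let ?t = "\<lambda>a b p q. complex_of_real (M1 (c div dw) a * M2 (c mod dw) b) *
           (cnj (V p i) * (g a (p div l) (q div l) * h b (p mod l) (q mod l)) * V q j)"
    have "lin_apply (dx * dy) (dv * dw) (kron_lin dy dw M1 M2) (compress (k * l) n V (tau dx dy k l g h)) c i j
      = (\<Sum>a<dx. \<Sum>b<dy. \<Sum>p<k * l. \<Sum>q<k * l. ?t a b p q)"
      using c ij by (simp add: lin_apply_def sum_mult_index kron_lin_def compress_def sum_distrib_left tau_less)
    also have "\<dots> = (\<Sum>a<dx. \<Sum>p<k * l. \<Sum>q<k * l. \<Sum>b<dy. ?t a b p q)"
      by (rule sum.cong[OF refl], rule sum_swap_outer)
    also have "\<dots> = (\<Sum>p<k * l. \<Sum>q<k * l. \<Sum>a<dx. \<Sum>b<dy. ?t a b p q)"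
      by (rule sum_swap_outer)
    also have "\<dots> = compress (k * l) n V (tau dv dw k l (lin_apply dx dv M1 g) (lin_apply dy dw M2 h)) c i j"
    proof -
      have "tau dv dw k l (lin_apply dx dv M1 g) (lin_apply dy dw M2 h) c p q
         = (\<Sum>a<dx. \<Sum>b<dy. complex_of_real (M1 (c div dw) a) * g a (p div l) (q div l)
              * (complex_of_real (M2 (c mod dw) b) * h b (p mod l) (q mod l)))"
        if "p < k * l" "q < k * l" for p q
        using c cw that by (simp add: tau_def lin_apply_def less_mult_imp_div_less sum_product)
      then show ?thesis
        using ij by (simp add: compress_def sum_distrib_left sum_distrib_right mult_ac)
    qed
    finally show ?thesis .
  qed (auto simp: lin_apply_def compress_def tau_def)
qed

lemma aos_carrier: "aos d G \<Longrightarrow> 1 \<le> n \<Longrightarrow> G n \<subseteq> carrier d n"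
  unfolding aos_def by blast

lemma aos_cvx_cone: "aos d G \<Longrightarrow> 1 \<le> n \<Longrightarrow> cvx_cone (G n)"
  unfolding aos_def by blast

lemma aos_seq_closed: "aos d G \<Longrightarrow> 1 \<le> n \<Longrightarrow> seq_closed (G n)"
  unfolding aos_def by blast

lemma aos_compress: "aos d G \<Longrightarrow> 1 \<le> n \<Longrightarrow> 1 \<le> m \<Longrightarrow> z \<in> G n \<Longrightarrow> compress n m V z \<in> G m"
  unfolding aos_def by blast

lemma aos_proper_cone: "aos d G \<Longrightarrow> proper_cone d (G 1)"
  unfolding aos_def by blast

lemma aos_dual_dual:
  "aos d G \<Longrightarrow> 1 \<le> n \<Longrightarrow> dual_cone d n (dual_cone d n (G n)) = G n"
  by (intro dual_cone_dual_cone aos_carrier aos_cvx_cone aos_seq_closed)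

lemma dual_sys_carrier: "dual_sys d G k \<subseteq> carrier d k"
  by (simp add: dual_sys_def dual_cone_carrier)

definition min_tp_gens :: "nat \<Rightarrow> osys \<Rightarrow> nat \<Rightarrow> osys \<Rightarrow> nat \<Rightarrow> elt set" where
  "min_tp_gens d G e H n = {compress (k * l) n V (tau d e k l g h) | k l g h V.
      1 \<le> k \<and> 1 \<le> l \<and> g \<in> G k \<and> h \<in> H l}"

lemma min_tp_cc_hull_gens: "min_tp d G e H n = cc_hull (d * e) n (min_tp_gens d G e H n)"
  by (simp add: min_tp_def min_tp_gens_def)

lemma min_tp_gens_carrier:
  assumes "\<And>k. 1 \<le> k \<Longrightarrow> G k \<subseteq> carrier d k" "\<And>l. 1 \<le> l \<Longrightarrow> H l \<subseteq> carrier e l"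
  shows "min_tp_gens d G e H n \<subseteq> carrier (d * e) n"
  using assms unfolding min_tp_gens_def by (auto intro!: compress_carrier tau_carrier)

lemma min_tp_gens_mem:
  "1 \<le> k \<Longrightarrow> 1 \<le> l \<Longrightarrow> g \<in> G k \<Longrightarrow> h \<in> H l \<Longrightarrow>
   compress (k * l) n V (tau d e k l g h) \<in> min_tp d G e H n"
  using cc_hull_superset[of "min_tp_gens d G e H n" "d * e" n]
  unfolding min_tp_cc_hull_gens min_tp_gens_def by blast

lemma min_tp_carrier:
  "(\<And>k. 1 \<le> k \<Longrightarrow> G k \<subseteq> carrier d k) \<Longrightarrow> (\<And>l. 1 \<le> l \<Longrightarrow> H l \<subseteq> carrier e l) \<Longrightarrow>
   min_tp d G e H n \<subseteq> carrier (d * e) n"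
  by (simp add: min_tp_cc_hull_gens cc_hull_carrier min_tp_gens_carrier)

lemma min_tp_cvx_cone: "cvx_cone (min_tp d G e H n)"
  by (simp add: min_tp_cc_hull_gens cc_hull_cvx_cone)

lemma min_tp_seq_closed: "seq_closed (min_tp d G e H n)"
  by (simp add: min_tp_cc_hull_gens cc_hull_seq_closed)

lemma min_tp_induct:
  assumes "\<And>k. 1 \<le> k \<Longrightarrow> G k \<subseteq> carrier d k" "\<And>l. 1 \<le> l \<Longrightarrow> H l \<subseteq> carrier e l"
    and "zlinear_continuous f" "cvx_cone K" "seq_closed K"
    and "\<And>k l g h V. 1 \<le> k \<Longrightarrow> 1 \<le> l \<Longrightarrow> g \<in> G k \<Longrightarrow> h \<in> H l \<Longrightarrow>
           f (compress (k * l) n V (tau d e k l g h)) \<in> K"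
    and "z \<in> min_tp d G e H n"
  shows "f z \<in> K"
proof (rule cc_hull_map_into[OF assms(3) min_tp_gens_carrier[OF assms(1,2)] assms(4,5)])
  show "z \<in> cc_hull (d * e) n (min_tp_gens d G e H n)"
    using assms(7) by (simp add: min_tp_cc_hull_gens)
next
  fix s assume "s \<in> min_tp_gens d G e H n"
  then obtain k l g h V where "s = compress (k * l) n V (tau d e k l g h)"
    and "1 \<le> k" "1 \<le> l" "g \<in> G k" "h \<in> H l"
    unfolding min_tp_gens_def by blast
  then show "f s \<in> K"
    using assms(6) by blast
qed

lemma min_tp_lin_apply:
  assumes "\<And>k. 1 \<le> k \<Longrightarrow> G k \<subseteq> carrier dx k" "\<And>l. 1 \<le> l \<Longrightarrow> H l \<subseteq> carrier dy l"
    and "\<And>k g. 1 \<le> k \<Longrightarrow> g \<in> G k \<Longrightarrow> lin_apply dx dv M1 g \<in> G' k"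
    and "\<And>k h. 1 \<le> k \<Longrightarrow> h \<in> H k \<Longrightarrow> lin_apply dy dw M2 h \<in> H' k"
    and "z \<in> min_tp dx G dy H n"
  shows "lin_apply (dx * dy) (dv * dw) (kron_lin dy dw M1 M2) z \<in> min_tp dv G' dw H' n"
  using assms(1,2) lin_apply_zlinear_continuous min_tp_cvx_cone min_tp_seq_closed _ assms(5)
  by (rule min_tp_induct) (auto simp: lin_apply_kron_compress_tau intro!: min_tp_gens_mem assms(3,4))

lemma min_tp_compress:
  assumes "\<And>k. 1 \<le> k \<Longrightarrow> G k \<subseteq> carrier d k" "\<And>l. 1 \<le> l \<Longrightarrow> H l \<subseteq> carrier e l"
    and "z \<in> min_tp d G e H n"
  shows "compress n m V z \<in> min_tp d G e H m"
  using assms(1,2) compress_zlinear_continuous min_tp_cvx_cone min_tp_seq_closed _ assms(3)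
  by (rule min_tp_induct) (auto simp: compress_compress intro!: min_tp_gens_mem)

section \<open>The dual of an abstract operator system\<close>

lemma dual_sys_compress:
  assumes G: "aos d G" and n: "1 \<le> n" and m: "1 \<le> m" and w: "w \<in> dual_sys d G n"
  shows "compress n m V w \<in> dual_sys d G m"
  unfolding dual_sys_def
proof (rule dual_coneI)
  show "compress n m V w \<in> carrier d m"
    using w dual_sys_carrier by (blast intro: compress_carrier)
  fix z assume "z \<in> G m"
  then have "compress m n (\<lambda>i p. V p i) z \<in> G n"
    by (rule aos_compress[OF G m n])
  then show "0 \<le> pair d m z (compress n m V w)"
    using w by (simp add: pair_compress_adjoint dual_sys_def dual_cone_def)
qed

definition norm1 :: "nat \<Rightarrow> elt \<Rightarrow> real" where
  "norm1 d y = (\<Sum>k<d. cmod (y k 0 0))"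

lemma norm1_nonneg: "0 \<le> norm1 d y"
  by (simp add: norm1_def sum_nonneg)

lemma norm1_zscale: "norm1 d (zscale t y) = \<bar>t\<bar> * norm1 d y"
  by (simp add: norm1_def zscale_def norm_mult sum_distrib_left)

lemma cmod_diag_le_norm1: "k < d \<Longrightarrow> cmod (y k 0 0) \<le> norm1 d y"
  unfolding norm1_def by (rule member_le_sum) auto

lemma cmod_le_norm1:
  assumes "y \<in> carrier d 1"
  shows "cmod (y k i j) \<le> norm1 d y"
proof (cases "k < d \<and> i = 0 \<and> j = 0")
  case True
  then show ?thesis using cmod_diag_le_norm1 by blast
next
  case False
  then have "y k i j = 0"
    using carrier_outside[OF assms] by auto
  then show ?thesis using norm1_nonneg by simp
qed

lemma norm1_eq_0:
  assumes "y \<in> carrier d 1" "norm1 d y = 0"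
  shows "y = zzero"
proof (rule carrier_eqI[OF assms(1) zzero_carrier])
  fix k i j
  show "y k i j = zzero k i j"
    using cmod_le_norm1[OF assms(1), of k i j] assms(2) by (simp add: zzero_def)
qed

lemma tendsto_norm1: "coord_tendsto s z \<Longrightarrow> (\<lambda>m. norm1 d (s m)) \<longlonglongrightarrow> norm1 d z"
  unfolding coord_tendsto_def norm1_def by (auto intro!: tendsto_intros)

lemma abs_pair_le_norm1: "\<bar>pair d 1 y v\<bar> \<le> norm1 d y * norm1 d v"
proof -
  have "\<bar>pair d 1 y v\<bar> \<le> cmod (\<Sum>k<d. y k 0 0 * v k 0 0)"
    using abs_Re_le_cmod[of "\<Sum>k<d. y k 0 0 * v k 0 0"] by (simp add: pair_def)
  also have "\<dots> \<le> (\<Sum>k<d. cmod (y k 0 0 * v k 0 0))"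
    by (rule norm_sum)
  also have "\<dots> \<le> (\<Sum>k<d. cmod (y k 0 0) * norm1 d v)"
    by (intro sum_mono) (simp add: norm_mult mult_left_mono cmod_diag_le_norm1)
  also have "\<dots> = norm1 d y * norm1 d v"
    by (simp add: norm1_def sum_distrib_right)
  finally show ?thesis .
qed

text \<open>Normalised pairs \<open>y\<^sub>m, k\<^sub>m\<close> with \<open>y\<^sub>m + k\<^sub>m \<rightarrow> 0\<close> have a limit point \<open>(Y, -Y)\<close> in the cone with
  \<open>Y \<noteq> 0\<close>.\<close>
lemma sharp_cone_no_vanishing_sum:
  fixes y k :: "nat \<Rightarrow> elt"
  assumes K: "K \<subseteq> carrier d 1" "seq_closed K" and sharp: "\<And>z. z \<in> K \<Longrightarrow> zneg z \<in> K \<Longrightarrow> z = zzero"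
    and yk: "\<And>m. y m \<in> K" "\<And>m. k m \<in> K" "\<And>m. norm1 d (y m) + norm1 d (k m) = 1"
  shows "\<not> (\<lambda>m. norm1 d (zadd (y m) (k m))) \<longlonglongrightarrow> 0"
proof
  assume lim0: "(\<lambda>m. norm1 d (zadd (y m) (k m))) \<longlonglongrightarrow> 0"
  have yC: "y m \<in> carrier d 1" and kC: "k m \<in> carrier d 1" for m
    using yk(1,2) K(1) by auto
  have bound: "cmod (y m a i j) \<le> 1" "cmod (k m a i j) \<le> 1" for m a i j
    using cmod_le_norm1[OF yC, of m a i j] cmod_le_norm1[OF kC, of m a i j] yk(3)[of m]
      norm1_nonneg[of d "y m"] norm1_nonneg[of d "k m"] by linarith+
  obtain r Y Z where r: "strict_mono r" and limY: "coord_tendsto (y \<circ> r) Y"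
    and limZ: "coord_tendsto (k \<circ> r) Z" and YC: "Y \<in> carrier d 1" and ZC: "Z \<in> carrier d 1"
    by (rule carrier_bounded_convergent_subseq2[OF yC bound(1) kC bound(2)])
  have YK: "Y \<in> K" and ZK: "Z \<in> K"
    using seq_closed_coord_tendsto[OF K(2) _ limY] seq_closed_coord_tendsto[OF K(2) _ limZ] yk
    by auto
  have "(\<lambda>m. norm1 d (zadd (y (r m)) (k (r m)))) \<longlonglongrightarrow> norm1 d (zadd Y Z)"
    using tendsto_norm1[OF coord_tendsto_zadd[OF limY limZ]] by (simp add: o_def)
  moreover have "(\<lambda>m. norm1 d (zadd (y (r m)) (k (r m)))) \<longlonglongrightarrow> 0"
    using LIMSEQ_subseq_LIMSEQ[OF lim0 r] by (simp add: o_def)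
  ultimately have "norm1 d (zadd Y Z) = 0"
    by (rule LIMSEQ_unique)
  then have sum0: "zadd Y Z = zzero"
    by (rule norm1_eq_0[OF zadd_carrier[OF YC ZC]])
  have "Z = zneg Y"
  proof (intro ext)
    fix a i j
    have "Y a i j + Z a i j = 0"
      using fun_cong[OF fun_cong[OF fun_cong[OF sum0, of a], of i], of j] by (simp add: zadd_def zzero_def)
    then show "Z a i j = zneg Y a i j"
      by (simp add: zneg_def eq_neg_iff_add_eq_0 add.commute)
  qed
  then have "Y = zzero" "Z = zzero"
    using sharp[OF YK] ZK sum0 by (auto simp: zneg_def zzero_def)
  moreover have "(\<lambda>m. norm1 d (y (r m)) + norm1 d (k (r m))) \<longlonglongrightarrow> norm1 d Y + norm1 d Z"
    using tendsto_add[OF tendsto_norm1[OF limY] tendsto_norm1[OF limZ]] by (simp add: o_def)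
  then have "(\<lambda>m. 1) \<longlonglongrightarrow> norm1 d Y + norm1 d Z"
    by (simp add: yk(3))
  then have "norm1 d Y + norm1 d Z = 1"
    using LIMSEQ_unique tendsto_const by metis
  ultimately show False
    by (simp add: norm1_def zzero_def)
qed

text \<open>On the orthant where exactly the coordinates in \<open>A\<close> are nonnegative, \<open>signed_sum d A\<close>
  is the \<open>\<ell>\<^sup>1\<close>-norm; unlike the norm it is linear.\<close>
definition signed_sum :: "nat \<Rightarrow> nat set \<Rightarrow> elt \<Rightarrow> real" where
  "signed_sum d A y = (\<Sum>k<d. (if k \<in> A then 1 else -1) * Re (y k 0 0))"

lemma signed_sum_le_norm1: "signed_sum d A y \<le> norm1 d y"
  unfolding signed_sum_def norm1_def
  by (intro sum_mono) (use abs_Re_le_cmod in \<open>auto simp: abs_le_iff\<close>)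

lemma signed_sum_sign_pattern:
  assumes "y \<in> carrier d 1"
  shows "signed_sum d {k. k < d \<and> 0 \<le> Re (y k 0 0)} y = norm1 d y"
proof -
  have "cmod (y k 0 0) = \<bar>Re (y k 0 0)\<bar>" for k
    by (metis carrier_diag_real[OF assms] norm_of_real)
  then show ?thesis
    unfolding signed_sum_def norm1_def by (intro sum.cong refl) auto
qed

lemma signed_sum_zadd: "signed_sum d A (zadd y z) = signed_sum d A y + signed_sum d A z"
  by (simp add: signed_sum_def zadd_def sum.distrib ring_distribs)

lemma signed_sum_zscale: "signed_sum d A (zscale t y) = t * signed_sum d A y"
  by (simp add: signed_sum_def zscale_def sum_distrib_left mult_ac)

definition slab_plus_cone :: "nat \<Rightarrow> elt set \<Rightarrow> nat set \<Rightarrow> elt set" where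
  "slab_plus_cone d K A = {zadd y k | y k. y \<in> K \<and> 1 \<le> signed_sum d A y \<and> k \<in> K}"

lemma slab_plus_cone_carrier: "K \<subseteq> carrier d 1 \<Longrightarrow> slab_plus_cone d K A \<subseteq> carrier d 1"
  unfolding slab_plus_cone_def by (auto intro!: zadd_carrier)

lemma slab_plus_cone_zconvex:
  assumes K: "cvx_cone K"
  shows "zconvex (slab_plus_cone d K A)"
  unfolding zconvex_def
proof (intro ballI allI impI)
  fix x1 x2 and t :: real
  assume "x1 \<in> slab_plus_cone d K A" "x2 \<in> slab_plus_cone d K A" and t: "0 \<le> t \<and> t \<le> 1"
  then obtain y1 k1 y2 k2 where x: "x1 = zadd y1 k1" "x2 = zadd y2 k2"
    and in_K: "y1 \<in> K" "k1 \<in> K" "y2 \<in> K" "k2 \<in> K"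
    and slab: "1 \<le> signed_sum d A y1" "1 \<le> signed_sum d A y2"
    unfolding slab_plus_cone_def by blast
  let ?y = "zadd (zscale t y1) (zscale (1 - t) y2)" and ?k = "zadd (zscale t k1) (zscale (1 - t) k2)"
  have "zadd (zscale t x1) (zscale (1 - t) x2) = zadd ?y ?k"
    by (auto simp: x zadd_def zscale_def algebra_simps intro!: ext)
  moreover have "?y \<in> K" "?k \<in> K"
    using in_K t by (auto intro!: cvx_cone_zadd[OF K] cvx_cone_zscale[OF K])
  moreover have "t * 1 \<le> t * signed_sum d A y1" "(1 - t) * 1 \<le> (1 - t) * signed_sum d A y2"
    using slab t by (intro mult_left_mono; simp)+
  then have "1 \<le> signed_sum d A ?y"
    by (simp add: signed_sum_zadd signed_sum_zscale)
  ultimately show "zadd (zscale t x1) (zscale (1 - t) x2) \<in> slab_plus_cone d K A"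
    unfolding slab_plus_cone_def by auto
qed

lemma zzero_not_limit_slab_plus_cone:
  assumes K: "K \<subseteq> carrier d 1" "cvx_cone K" "seq_closed K"
    and sharp: "\<And>z. z \<in> K \<Longrightarrow> zneg z \<in> K \<Longrightarrow> z = zzero"
  shows "\<not> (\<exists>s. (\<forall>m. s m \<in> slab_plus_cone d K A) \<and> coord_tendsto s zzero)"
proof
  assume "\<exists>s. (\<forall>m. s m \<in> slab_plus_cone d K A) \<and> coord_tendsto s zzero"
  then obtain s where s: "\<And>m. s m \<in> slab_plus_cone d K A" and lim: "coord_tendsto s zzero"
    by blast
  then have "\<forall>m. \<exists>y k. s m = zadd y k \<and> y \<in> K \<and> 1 \<le> signed_sum d A y \<and> k \<in> K"
    unfolding slab_plus_cone_def by blast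
  then obtain y k where s_eq: "\<And>m. s m = zadd (y m) (k m)" and yk: "\<And>m. y m \<in> K" "\<And>m. k m \<in> K"
    and slab: "\<And>m. 1 \<le> signed_sum d A (y m)"
    by metis
  define t where "t m = norm1 d (y m) + norm1 d (k m)" for m
  have t: "1 \<le> t m" for m
    using slab[of m] signed_sum_le_norm1[of d A "y m"] norm1_nonneg[of d "k m"] by (simp add: t_def)
  let ?y = "\<lambda>m. zscale (1 / t m) (y m)" and ?k = "\<lambda>m. zscale (1 / t m) (k m)"
  have small: "norm1 d (zadd (?y m) (?k m)) \<le> norm1 d (s m)" for m
  proof -
    have "norm1 d (zadd (?y m) (?k m)) = norm1 d (s m) / t m"
      using t[of m] by (simp add: s_eq zadd_zscale norm1_zscale)
    also have "\<dots> \<le> norm1 d (s m)"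
      using t[of m] norm1_nonneg[of d "s m"] by (simp add: divide_le_eq mult_le_cancel_left1)
    finally show ?thesis .
  qed
  have "(\<lambda>m. norm1 d (zadd (?y m) (?k m))) \<longlonglongrightarrow> 0"
  proof (rule real_tendsto_sandwich[of "\<lambda>_. 0" _ _ "\<lambda>m. norm1 d (s m)"])
    show "eventually (\<lambda>m. 0 \<le> norm1 d (zadd (?y m) (?k m))) sequentially"
      by (simp add: norm1_nonneg)
    show "eventually (\<lambda>m. norm1 d (zadd (?y m) (?k m)) \<le> norm1 d (s m)) sequentially"
      using small by (intro always_eventually allI)
    show "(\<lambda>m. norm1 d (s m)) \<longlonglongrightarrow> 0"
      using tendsto_norm1[OF lim] by (simp add: norm1_def zzero_def)
  qed simp
  moreover have "norm1 d (?y m) + norm1 d (?k m) = 1" for m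
  proof -
    have "norm1 d (?y m) + norm1 d (?k m) = (norm1 d (y m) + norm1 d (k m)) / t m"
      using t[of m] by (simp add: norm1_zscale add_divide_distrib)
    then show ?thesis
      using t[of m] by (simp add: t_def)
  qed
  moreover have "?y m \<in> K" "?k m \<in> K" for m
    using t[of m] by (simp_all add: cvx_cone_zscale[OF K(2)] yk)
  ultimately show False
    using sharp_cone_no_vanishing_sum[OF K(1,3) sharp, of ?y ?k] by blast
qed

lemma slab_plus_cone_normalized:
  assumes K: "cvx_cone K" and y: "y \<in> K" "0 < signed_sum d A y"
  shows "zscale (1 / signed_sum d A y) y \<in> slab_plus_cone d K A"
proof -
  have "zscale (1 / signed_sum d A y) y = zadd (zscale (1 / signed_sum d A y) y) zzero"
    by (simp add: zadd_def zzero_def)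
  then show ?thesis
    unfolding slab_plus_cone_def using y cvx_cone_zzero[OF K]
    by (auto intro!: exI cvx_cone_zscale[OF K] simp: signed_sum_zscale)
qed

text \<open>Adding the cone to the slab is what forces a separating functional into the dual cone.\<close>
lemma slab_plus_cone_separator_dual:
  assumes K: "cvx_cone K" and y0: "y0 \<in> K" "1 \<le> signed_sum d A y0"
    and w: "w \<in> carrier d 1" "\<delta> > 0" and sep: "\<And>s. s \<in> slab_plus_cone d K A \<Longrightarrow> \<delta> \<le> pair d 1 s w"
  shows "w \<in> dual_cone d 1 K"
proof (rule dual_coneI[OF w(1)])
  fix k assume k: "k \<in> K"
  show "0 \<le> pair d 1 k w"
  proof (rule ccontr)
    assume neg: "\<not> 0 \<le> pair d 1 k w"
    define t where "t = (\<bar>pair d 1 y0 w\<bar> + 1) / - pair d 1 k w"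
    have t: "0 \<le> t"
      using neg unfolding t_def by (intro divide_nonneg_pos) auto
    have t_eq: "t * pair d 1 k w = - (\<bar>pair d 1 y0 w\<bar> + 1)"
      using neg by (simp add: t_def)
    have "zadd y0 (zscale t k) \<in> slab_plus_cone d K A"
      unfolding slab_plus_cone_def using y0 cvx_cone_zscale[OF K k t] by blast
    then have "\<delta> \<le> pair d 1 y0 w + t * pair d 1 k w"
      using sep[of "zadd y0 (zscale t k)"] by (simp add: pair_zadd_left pair_zscale_left)
    then show False
      using t_eq w(2) by linarith
  qed
qed

lemma dual_cone_dominates_signed_sum:
  assumes K: "K \<subseteq> carrier d 1" "cvx_cone K" "seq_closed K"
    and sharp: "\<And>z. z \<in> K \<Longrightarrow> zneg z \<in> K \<Longrightarrow> z = zzero"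
  obtains w where "w \<in> dual_cone d 1 K" "\<And>y. y \<in> K \<Longrightarrow> signed_sum d A y \<le> pair d 1 y w"
proof (cases "slab_plus_cone d K A = {}")
  case True
  have "signed_sum d A y \<le> 0" if "y \<in> K" for y
  proof (rule ccontr)
    assume "\<not> signed_sum d A y \<le> 0"
    then have "zscale (1 / signed_sum d A y) y \<in> slab_plus_cone d K A"
      by (intro slab_plus_cone_normalized[OF K(2) that]) simp
    with True show False by blast
  qed
  then show ?thesis
    using that[of zzero] by (simp add: dual_coneI zzero_carrier)
next
  case False
  obtain w \<delta> where w: "w \<in> carrier d 1" "\<delta> > 0"
    and sep: "\<And>s. s \<in> slab_plus_cone d K A \<Longrightarrow> \<delta> \<le> pair d 1 s w"
    using convex_separation[OF slab_plus_cone_carrier[OF K(1)] slab_plus_cone_zconvex[OF K(2)] False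
        zzero_carrier zzero_not_limit_slab_plus_cone[OF K sharp]]
    by (metis add_0 pair_zzero_left)
  obtain y0 where "y0 \<in> K" "1 \<le> signed_sum d A y0"
    using False unfolding slab_plus_cone_def by blast
  then have w_dual: "w \<in> dual_cone d 1 K"
    using slab_plus_cone_separator_dual[OF K(2) _ _ w sep] by blast
  have "signed_sum d A y \<le> pair d 1 y (zscale (1 / \<delta>) w)" if y: "y \<in> K" for y
  proof (cases "0 < signed_sum d A y")
    case True
    then have "\<delta> \<le> pair d 1 y w / signed_sum d A y"
      using sep[OF slab_plus_cone_normalized[OF K(2) y True]] by (simp add: pair_zscale_left)
    then show ?thesis
      using True w(2) by (simp add: pair_zscale_right field_simps)
  next
    case False
    moreover have "0 \<le> pair d 1 y w / \<delta>"
      using dual_cone_nonneg[OF w_dual y] w(2) by simp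
    ultimately show ?thesis
      by (simp add: pair_zscale_right)
  qed
  moreover have "zscale (1 / \<delta>) w \<in> dual_cone d 1 K"
    using w(2) by (intro cvx_cone_zscale[OF dual_cone_cvx_cone w_dual]) simp
  ultimately show ?thesis
    using that by blast
qed

text \<open>Add up the dominating dual elements of all sign patterns.\<close>
lemma sharp_cone_norm1_dominated:
  assumes K: "K \<subseteq> carrier d 1" "cvx_cone K" "seq_closed K"
    and sharp: "\<And>z. z \<in> K \<Longrightarrow> zneg z \<in> K \<Longrightarrow> z = zzero"
  obtains W where "W \<in> dual_cone d 1 K" "\<And>y. y \<in> K \<Longrightarrow> norm1 d y \<le> pair d 1 y W"
proof -
  have "\<forall>A. \<exists>w. w \<in> dual_cone d 1 K \<and> (\<forall>y\<in>K. signed_sum d A y \<le> pair d 1 y w)"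
  proof
    fix A
    show "\<exists>w. w \<in> dual_cone d 1 K \<and> (\<forall>y\<in>K. signed_sum d A y \<le> pair d 1 y w)"
      by (rule dual_cone_dominates_signed_sum[OF K sharp, of A]) auto
  qed
  then obtain w where w: "\<And>A. w A \<in> dual_cone d 1 K"
    and dom: "\<And>A y. y \<in> K \<Longrightarrow> signed_sum d A y \<le> pair d 1 y (w A)"
    by metis
  define W where "W = (\<lambda>k i j. \<Sum>A\<in>Pow {..<d}. w A k i j)"
  have "W \<in> dual_cone d 1 K"
  proof (rule dual_coneI)
    show "W \<in> carrier d 1"
      unfolding W_def by (rule carrier_sum) (use w dual_cone_carrier in blast)
    show "0 \<le> pair d 1 y W" if "y \<in> K" for y
      unfolding W_def pair_sum_right using dual_cone_nonneg[OF w that] by (rule sum_nonneg)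
  qed
  moreover have "norm1 d y \<le> pair d 1 y W" if y: "y \<in> K" for y
  proof -
    define A where "A = {k. k < d \<and> 0 \<le> Re (y k 0 0)}"
    have "norm1 d y = signed_sum d A y"
      unfolding A_def using y K(1) by (simp add: signed_sum_sign_pattern subset_iff)
    also have "\<dots> \<le> pair d 1 y (w A)"
      by (rule dom[OF y])
    also have "\<dots> \<le> (\<Sum>A\<in>Pow {..<d}. pair d 1 y (w A))"
      using dual_cone_nonneg[OF w y] by (intro member_le_sum) (auto simp: A_def)
    also have "\<dots> = pair d 1 y W"
      by (simp add: W_def pair_sum_right)
    finally show ?thesis .
  qed
  ultimately show ?thesis
    using that by blast
qed

lemma dual_cone_sharp:
  assumes G: "aos d G" and w: "w \<in> dual_cone d 1 (G 1)" "zneg w \<in> dual_cone d 1 (G 1)"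
  shows "w = zzero"
proof -
  obtain z0 e where z0: "z0 \<in> G 1" and e: "e > 0"
    and ball: "\<And>u. u \<in> carrier d 1 \<Longrightarrow> (\<Sum>k<d. cmod (u k 0 0 - z0 k 0 0)) < e \<Longrightarrow> u \<in> G 1"
    using aos_proper_cone[OF G] unfolding proper_cone_def by blast
  have GC: "G 1 \<subseteq> carrier d 1"
    using aos_carrier[OF G, of 1] by simp
  have wC: "w \<in> carrier d 1"
    using w(1) dual_cone_carrier by blast
  have vanish: "pair d 1 y w = 0" if "y \<in> G 1" for y
    using dual_cone_nonneg[OF w(1) that] dual_cone_nonneg[OF w(2) that] by (simp add: pair_zneg_right)
  have "w k 0 0 = 0" if k: "k < d" for k
  proof -
    define b :: elt where "b = (\<lambda>k' i j. if k' = k \<and> i = 0 \<and> j = 0 then 1 else 0)"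
    define u where "u = zadd z0 (zscale (e / 2) b)"
    have "b \<in> carrier d 1"
      unfolding b_def using k by (intro carrierI) auto
    then have "u \<in> carrier d 1"
      unfolding u_def using z0 GC by (intro zadd_carrier zscale_carrier) auto
    moreover have "(\<Sum>k'<d. cmod (u k' 0 0 - z0 k' 0 0)) = (\<Sum>k'<d. if k' = k then e / 2 else 0)"
      using e by (intro sum.cong refl) (simp add: u_def b_def zadd_def zscale_def)
    moreover have "\<dots> = e / 2"
      using k by simp
    ultimately have "u \<in> G 1"
      using ball e by simp
    moreover have "pair d 1 b w = (\<Sum>k'<d. if k' = k then Re (w k 0 0) else 0)"
      unfolding pair_def Re_sum by (intro sum.cong refl) (simp add: b_def)
    moreover have "\<dots> = Re (w k 0 0)"
      using k by simp
    ultimately have "Re (w k 0 0) = 0"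
      using vanish[of u] vanish[OF z0] e by (simp add: u_def pair_zadd_left pair_zscale_left)
    then show ?thesis
      by (metis carrier_diag_real[OF wC] of_real_0)
  qed
  then show ?thesis
    by (intro carrier_eqI[OF wC zzero_carrier]) (simp add: zzero_def)
qed

lemma norm1_dominated_ball_dual_cone:
  assumes dom: "\<And>y. y \<in> K \<Longrightarrow> norm1 d y \<le> pair d 1 y W"
    and u: "u \<in> carrier d 1" "(\<Sum>k<d. cmod (u k 0 0 - W k 0 0)) < 1"
  shows "u \<in> dual_cone d 1 K"
proof (rule dual_coneI[OF u(1)])
  fix y assume y: "y \<in> K"
  have "\<bar>pair d 1 y (zsub u W)\<bar> \<le> norm1 d y * norm1 d (zsub u W)"
    by (rule abs_pair_le_norm1)
  also have "\<dots> \<le> norm1 d y"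
    using u(2) norm1_nonneg[of d y] by (intro mult_left_le) (auto simp: norm1_def zsub_def)
  finally show "0 \<le> pair d 1 y u"
    using dom[OF y] by (simp add: pair_zsub_right)
qed

lemma dual_sys_aos:
  assumes G: "aos d G"
  shows "aos d (dual_sys d G)"
proof -
  have K: "G 1 \<subseteq> carrier d 1" "cvx_cone (G 1)" "seq_closed (G 1)"
    and sharp: "\<And>z. z \<in> G 1 \<Longrightarrow> zneg z \<in> G 1 \<Longrightarrow> z = zzero"
    using aos_proper_cone[OF G] unfolding proper_cone_def by blast+
  obtain W where W: "W \<in> dual_cone d 1 (G 1)" and dom: "\<And>y. y \<in> G 1 \<Longrightarrow> norm1 d y \<le> pair d 1 y W"
    using sharp_cone_norm1_dominated[OF K sharp] by blast
  show ?thesis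
    unfolding aos_def
  proof (intro conjI allI impI ballI)
    fix n :: nat
    show "dual_sys d G n \<subseteq> carrier d n" "cvx_cone (dual_sys d G n)" "seq_closed (dual_sys d G n)"
      by (simp_all add: dual_sys_def dual_cone_carrier dual_cone_cvx_cone dual_cone_seq_closed)
  next
    fix n m :: nat and V z
    assume "1 \<le> n" "1 \<le> m" "z \<in> dual_sys d G n"
    then show "compress n m V z \<in> dual_sys d G m"
      by (rule dual_sys_compress[OF G])
  next
    show "proper_cone d (dual_sys d G 1)"
      unfolding proper_cone_def dual_sys_def
    proof (intro conjI ballI impI dual_cone_carrier dual_cone_cvx_cone dual_cone_seq_closed)
      fix z assume "z \<in> dual_cone d 1 (G 1)" "zneg z \<in> dual_cone d 1 (G 1)"
      then show "z = zzero" by (rule dual_cone_sharp[OF G])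
    next
      show "\<exists>z\<in>dual_cone d 1 (G 1). \<exists>e>0. \<forall>w\<in>carrier d 1.
          (\<Sum>k<d. cmod (w k 0 0 - z k 0 0)) < e \<longrightarrow> w \<in> dual_cone d 1 (G 1)"
        using W norm1_dominated_ball_dual_cone[OF dom] by (intro bexI[of _ W] exI[of _ 1]) auto
    qed
  qed
qed

section \<open>Positive semidefinite matrices and the scalar operator system\<close>

definition zone :: elt where
  "zone = (\<lambda>k i j. if k = 0 \<and> i = 0 \<and> j = 0 then 1 else 0)"

lemma zone_carrier: "zone \<in> carrier 1 1"
  by (rule carrierI) (auto simp: zone_def)

lemma psd_carrier: "psd m \<subseteq> carrier 1 m"
  by (auto simp: psd_def)

lemma psdI:
  "z \<in> carrier 1 m \<Longrightarrow> (\<And>v. 0 \<le> Re (\<Sum>i<m. \<Sum>j<m. cnj (v i) * z 0 i j * v j)) \<Longrightarrow> z \<in> psd m"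
  by (simp add: psd_def)

lemma psdD: "z \<in> psd m \<Longrightarrow> 0 \<le> Re (\<Sum>i<m. \<Sum>j<m. cnj (v i) * z 0 i j * v j)"
  by (simp add: psd_def)

lemma psd_cvx_cone: "cvx_cone (psd m)"
proof (rule cvx_coneI)
  show "zzero \<in> psd m"
    by (rule psdI[OF zzero_carrier]) (simp add: zzero_def)
  show "zadd x y \<in> psd m" if "x \<in> psd m" "y \<in> psd m" for x y
  proof (rule psdI)
    show "zadd x y \<in> carrier 1 m"
      using that psd_carrier by (blast intro: zadd_carrier)
    fix v
    have "(\<Sum>i<m. \<Sum>j<m. cnj (v i) * zadd x y 0 i j * v j)
        = (\<Sum>i<m. \<Sum>j<m. cnj (v i) * x 0 i j * v j) + (\<Sum>i<m. \<Sum>j<m. cnj (v i) * y 0 i j * v j)"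
      by (simp add: zadd_def ring_distribs sum.distrib)
    then show "0 \<le> Re (\<Sum>i<m. \<Sum>j<m. cnj (v i) * zadd x y 0 i j * v j)"
      using psdD[OF that(1), of v] psdD[OF that(2), of v] by simp
  qed
  show "zscale r x \<in> psd m" if "x \<in> psd m" "0 \<le> r" for x r
  proof (rule psdI)
    show "zscale r x \<in> carrier 1 m"
      using that psd_carrier by (blast intro: zscale_carrier)
    fix v
    have "(\<Sum>i<m. \<Sum>j<m. cnj (v i) * zscale r x 0 i j * v j)
        = complex_of_real r * (\<Sum>i<m. \<Sum>j<m. cnj (v i) * x 0 i j * v j)"
      by (simp add: zscale_def sum_distrib_left mult_ac)
    then show "0 \<le> Re (\<Sum>i<m. \<Sum>j<m. cnj (v i) * zscale r x 0 i j * v j)"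
      using psdD[OF that(1), of v] that(2) by simp
  qed
qed

lemma psd_seq_closed: "seq_closed (psd m)"
proof (rule seq_closedI)
  fix s z assume s: "\<And>l. s l \<in> psd m" and lim: "coord_tendsto s z"
  show "z \<in> psd m"
  proof (rule psdI)
    show "z \<in> carrier 1 m"
      using seq_closed_coord_tendsto[OF carrier_seq_closed _ lim] s psd_carrier by blast
    fix v
    have "(\<lambda>l. Re (\<Sum>i<m. \<Sum>j<m. cnj (v i) * s l 0 i j * v j)) \<longlonglongrightarrow> Re (\<Sum>i<m. \<Sum>j<m. cnj (v i) * z 0 i j * v j)"
      using lim unfolding coord_tendsto_def by (auto intro!: tendsto_intros)
    then show "0 \<le> Re (\<Sum>i<m. \<Sum>j<m. cnj (v i) * z 0 i j * v j)"
      by (rule LIMSEQ_le_const) (use s psdD in blast)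
  qed
qed

lemma compress_zone: "compress 1 m V zone 0 i j = (if i < m \<and> j < m then cnj (V 0 i) * V 0 j else 0)"
  by (simp add: compress_def zone_def)

lemma rank_one_psd: "compress 1 m V zone \<in> psd m"
proof (rule psdI[OF compress_carrier[OF zone_carrier]])
  fix v
  have "(\<Sum>i<m. \<Sum>j<m. cnj (v i) * compress 1 m V zone 0 i j * v j)
     = (\<Sum>i<m. \<Sum>j<m. cnj (V 0 i * v i) * (V 0 j * v j))"
    using compress_zone[of m V] by (intro sum.cong refl) (simp add: mult_ac)
  also have "\<dots> = cnj (\<Sum>i<m. V 0 i * v i) * (\<Sum>j<m. V 0 j * v j)"
    by (simp add: sum_product cnj_sum)
  also have "\<dots> = complex_of_real ((cmod (\<Sum>j<m. V 0 j * v j))\<^sup>2)"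
    by (metis complex_norm_square mult.commute of_real_power)
  finally show "0 \<le> Re (\<Sum>i<m. \<Sum>j<m. cnj (v i) * compress 1 m V zone 0 i j * v j)"
    by simp
qed

text \<open>The operator system of \<open>\<real>\<close>. Its cones are generated by the rank-one matrices, so
  they are the \<open>Psd\<^sub>m\<close>; only the inclusion into \<^const>\<open>psd\<close> is needed below.\<close>
definition scalar_osys :: osys where
  "scalar_osys = (\<lambda>m. cc_hull 1 m {compress 1 m V zone | V. True})"

lemma rank_one_carrier: "{compress 1 m V zone | V. True} \<subseteq> carrier 1 m"
  using compress_carrier[OF zone_carrier] by blast

lemma rank_one_scalar_osys: "compress 1 m V zone \<in> scalar_osys m"
  using cc_hull_superset[of "{compress 1 m V zone | V. True}" 1 m] by (auto simp: scalar_osys_def)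

lemma scalar_osys_psd: "scalar_osys m \<subseteq> psd m"
  unfolding scalar_osys_def
  by (intro cc_hull_least psd_cvx_cone psd_seq_closed psd_carrier) (use rank_one_psd in blast)

lemma scalar_osys_carrier: "scalar_osys m \<subseteq> carrier 1 m"
  unfolding scalar_osys_def by (rule cc_hull_carrier[OF rank_one_carrier])

lemma scalar_osys_cvx_cone: "cvx_cone (scalar_osys m)"
  unfolding scalar_osys_def by (rule cc_hull_cvx_cone)

lemma scalar_osys_seq_closed: "seq_closed (scalar_osys m)"
  unfolding scalar_osys_def by (rule cc_hull_seq_closed)

lemma scalar_osys_map_into:
  assumes "zlinear_continuous f" "cvx_cone K" "seq_closed K"
    and "\<And>V. f (compress 1 m V zone) \<in> K" and "z \<in> scalar_osys m"
  shows "f z \<in> K"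
  using assms(5) unfolding scalar_osys_def
  by (rule cc_hull_map_into[OF assms(1) rank_one_carrier assms(2,3), rotated]) (use assms(4) in blast)

lemma scalar_osys_one_dim:
  assumes w: "w \<in> carrier 1 1" "0 \<le> Re (w 0 0 0)"
  shows "w \<in> scalar_osys 1"
proof -
  define c where "c = complex_of_real (sqrt (Re (w 0 0 0)))"
  have "cnj c * c = w 0 0 0"
    using w(2) carrier_diag_real[OF w(1), of 0 0]
    by (simp add: c_def flip: of_real_mult)
  then have "compress 1 1 (\<lambda>_ _. c) zone = w"
    by (intro carrier_eqI[OF compress_carrier[OF zone_carrier] w(1)]) (simp add: compress_def zone_def)
  then show ?thesis
    using rank_one_scalar_osys[of 1 "\<lambda>_ _. c"] by simp
qed

lemma scalar_osys_aos: "aos 1 scalar_osys"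
  unfolding aos_def
proof (intro conjI allI impI ballI scalar_osys_carrier scalar_osys_cvx_cone scalar_osys_seq_closed)
  fix n m :: nat and V z
  assume z: "z \<in> scalar_osys n"
  show "compress n m V z \<in> scalar_osys m"
    by (rule scalar_osys_map_into[OF compress_zlinear_continuous scalar_osys_cvx_cone scalar_osys_seq_closed _ z])
      (use rank_one_scalar_osys in \<open>simp add: compress_compress\<close>)
next
  show "proper_cone 1 (scalar_osys 1)"
    unfolding proper_cone_def
  proof (intro conjI ballI impI scalar_osys_carrier scalar_osys_cvx_cone scalar_osys_seq_closed)
    fix z assume z: "z \<in> scalar_osys 1" "zneg z \<in> scalar_osys 1"
    then have zC: "z \<in> carrier 1 1"
      using scalar_osys_carrier by blast
    have "0 \<le> Re (z 0 0 0)" "0 \<le> - Re (z 0 0 0)"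
      using psdD[of _ 1 "\<lambda>_. 1"] scalar_osys_psd z by (force simp: zneg_def)+
    then have "z 0 0 0 = 0"
      using carrier_diag_real[OF zC, of 0 0] by (metis antisym neg_0_le_iff_le of_real_0)
    then show "z = zzero"
      by (intro carrier_eqI[OF zC zzero_carrier]) (auto simp: zzero_def)
  next
    have "zone \<in> scalar_osys 1"
      by (rule scalar_osys_one_dim[OF zone_carrier]) (simp add: zone_def)
    moreover have "w \<in> scalar_osys 1"
      if "w \<in> carrier 1 1" "(\<Sum>k<1. cmod (w k 0 0 - zone k 0 0)) < 1" for w
    proof (rule scalar_osys_one_dim[OF that(1)])
      have "\<bar>Re (w 0 0 0) - 1\<bar> < 1"
        using that(2) abs_Re_le_cmod[of "w 0 0 0 - 1"] by (simp add: zone_def)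
      then show "0 \<le> Re (w 0 0 0)" by linarith
    qed
    ultimately show "\<exists>z\<in>scalar_osys 1. \<exists>e>0. \<forall>w\<in>carrier 1 1.
        (\<Sum>k<1. cmod (w k 0 0 - z k 0 0)) < e \<longrightarrow> w \<in> scalar_osys 1"
      by (intro bexI[of _ zone] exI[of _ 1]) auto
  qed
qed

lemma scalar_osys_cp_map:
  assumes G: "aos d G" and g: "g \<in> G 1"
  shows "cp_map 1 scalar_osys d G (\<lambda>k _. Re (g k 0 0))"
  unfolding cp_map_def
proof (intro allI impI ballI)
  fix n :: nat and z assume n: "1 \<le> n" and z: "z \<in> scalar_osys n"
  have gC: "g \<in> carrier d 1"
    using aos_carrier[OF G, of 1] g by auto
  have "lin_apply 1 d (\<lambda>k _. Re (g k 0 0)) (compress 1 n V zone) = compress 1 n V g" for V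
  proof (intro ext)
    fix k i j
    show "lin_apply 1 d (\<lambda>k _. Re (g k 0 0)) (compress 1 n V zone) k i j = compress 1 n V g k i j"
      using carrier_outside[OF gC, of k 0 0]
      by (cases "k < d") (auto simp: lin_apply_def compress_def zone_def carrier_diag_real[OF gC] mult_ac)
  qed
  then show "lin_apply 1 d (\<lambda>k _. Re (g k 0 0)) z \<in> G n"
    using aos_compress[OF G _ n g]
    by (intro scalar_osys_map_into[OF lin_apply_zlinear_continuous aos_cvx_cone[OF G n] aos_seq_closed[OF G n] _ z])
      simp
qed

section \<open>Evaluating the triple maximal cone on \<open>x \<otimes> a\<close>\<close>

text \<open>A functional \<open>l\<close> on \<open>V \<otimes> X\<close> (an element of \<open>carrier (dv * e) 1\<close>) as the matrix of the
  induced linear map \<open>X \<rightarrow> V\<close>.\<close>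
definition curry_matrix :: "nat \<Rightarrow> elt \<Rightarrow> nat \<Rightarrow> nat \<Rightarrow> real" where
  "curry_matrix e l = (\<lambda>i j. Re (l (i * e + j) 0 0))"

definition curry_apply :: "nat \<Rightarrow> nat \<Rightarrow> nat \<Rightarrow> nat \<Rightarrow> elt \<Rightarrow> elt \<Rightarrow> elt \<Rightarrow> elt" where
  "curry_apply dx dy dv dw l1 l2 a =
     lin_apply (dx * dy) (dv * dw) (kron_lin dy dw (curry_matrix dx l1) (curry_matrix dy l2)) a"

text \<open>\<open>\<Sum>\<^sub>c x\<^sub>c \<otimes> b\<^sub>c \<in> Her\<^sub>n\<^sub>i\<^sub>n\<close>: the contraction of \<open>x \<in> (V \<otimes> W) \<otimes> Her\<^sub>n\<^sub>i\<close> with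
  \<open>b \<in> (V \<otimes> W) \<otimes> Her\<^sub>n\<close> over \<open>V \<otimes> W\<close>, with Kronecker products of the matrix parts.\<close>
definition kron_contract :: "nat \<Rightarrow> nat \<Rightarrow> nat \<Rightarrow> nat \<Rightarrow> elt \<Rightarrow> elt \<Rightarrow> elt" where
  "kron_contract dv dw ni n x b = (\<lambda>k r s. if k = 0 \<and> r < ni * n \<and> s < ni * n then
      (\<Sum>c<dv * dw. x c (r div n) (s div n) * b c (r mod n) (s mod n)) else 0)"

lemma curry_apply_carrier: "a \<in> carrier (dx * dy) n \<Longrightarrow> curry_apply dx dy dv dw l1 l2 a \<in> carrier (dv * dw) n"
  unfolding curry_apply_def by (rule lin_apply_carrier)

lemma curry_apply_less:
  assumes l1: "l1 \<in> carrier (dv * dx) 1" and l2: "l2 \<in> carrier (dw * dy) 1" and kv: "kv < dv" and kw: "kw < dw"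
  shows "curry_apply dx dy dv dw l1 l2 a (kv * dw + kw) i j
    = (\<Sum>kx<dx. \<Sum>ky<dy. l1 (kv * dx + kx) 0 0 * l2 (kw * dy + ky) 0 0 * a (kx * dy + ky) i j)"
  using kv kw mult_index_less[OF kv kw]
  by (simp add: curry_apply_def lin_apply_def sum_mult_index kron_lin_def curry_matrix_def
      carrier_diag_real[OF l1] carrier_diag_real[OF l2])

lemma kron_contract_carrier:
  assumes x: "x \<in> carrier (dv * dw) ni" and b: "b \<in> carrier (dv * dw) n"
  shows "kron_contract dv dw ni n x b \<in> carrier 1 (ni * n)"
  by (rule carrierI)
    (auto simp: kron_contract_def cnj_sum carrier_cnj[OF x, symmetric] carrier_cnj[OF b, symmetric])

lemma trip_eval_xa_tensor:
  assumes l1: "l1 \<in> carrier (dv * dx) 1" and l2: "l2 \<in> carrier (dw * dy) 1"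
  shows "trip_eval (dv * dx) (dw * dy) (ni * n) l1 l2 l3 (xa_tensor dv dw ni x dx dy n a)
     = pair 1 (ni * n) (kron_contract dv dw ni n x (curry_apply dx dy dv dw l1 l2 a)) l3"
proof -
  let ?X = "xa_tensor dv dw ni x dx dy n a" and ?b = "curry_apply dx dy dv dw l1 l2 a"
  have inner: "(\<Sum>c1<dv * dx. \<Sum>c2<dw * dy. l1 c1 0 0 * l2 c2 0 0 * ?X (c1 * (dw * dy) + c2) r s)
    = kron_contract dv dw ni n x ?b 0 r s" if rs: "r < ni * n" "s < ni * n" for r s
  proof -
    let ?t = "\<lambda>kv kx kw ky. l1 (kv * dx + kx) 0 0 * l2 (kw * dy + ky) 0 0 *
           (x (kv * dw + kw) (r div n) (s div n) * a (kx * dy + ky) (r mod n) (s mod n))"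
    have "(\<Sum>c1<dv * dx. \<Sum>c2<dw * dy. l1 c1 0 0 * l2 c2 0 0 * ?X (c1 * (dw * dy) + c2) r s)
        = (\<Sum>kv<dv. \<Sum>kx<dx. \<Sum>kw<dw. \<Sum>ky<dy. ?t kv kx kw ky)"
      unfolding sum_mult_index using rs
      by (intro sum.cong refl) (simp add: xa_tensor_def Let_def mult_index_less)
    also have "\<dots> = (\<Sum>kv<dv. \<Sum>kw<dw. \<Sum>kx<dx. \<Sum>ky<dy. ?t kv kx kw ky)"
      by (rule sum.cong[OF refl], rule sum.swap)
    also have "\<dots> = (\<Sum>kv<dv. \<Sum>kw<dw. x (kv * dw + kw) (r div n) (s div n) * ?b (kv * dw + kw) (r mod n) (s mod n))"
      by (intro sum.cong refl) (simp add: curry_apply_less[OF l1 l2] sum_distrib_left mult_ac)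
    also have "\<dots> = kron_contract dv dw ni n x ?b 0 r s"
      using rs by (simp add: kron_contract_def sum_mult_index)
    finally show ?thesis .
  qed
  let ?u = "\<lambda>c1 c2 r s. l3 0 r s * (l1 c1 0 0 * l2 c2 0 0 * ?X (c1 * (dw * dy) + c2) r s)"
  have "(\<Sum>c1<dv * dx. \<Sum>c2<dw * dy. \<Sum>r<ni * n. \<Sum>s<ni * n. ?u c1 c2 r s)
      = (\<Sum>c1<dv * dx. \<Sum>r<ni * n. \<Sum>s<ni * n. \<Sum>c2<dw * dy. ?u c1 c2 r s)"
    by (rule sum.cong[OF refl], rule sum_swap_outer)
  also have "\<dots> = (\<Sum>r<ni * n. \<Sum>s<ni * n. \<Sum>c1<dv * dx. \<Sum>c2<dw * dy. ?u c1 c2 r s)"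
    by (rule sum_swap_outer)
  also have "\<dots> = (\<Sum>r<ni * n. \<Sum>s<ni * n. l3 0 r s * kron_contract dv dw ni n x ?b 0 r s)"
    by (intro sum.cong refl) (simp add: inner[symmetric] sum_distrib_left)
  finally have "(\<Sum>c1<dv * dx. \<Sum>c2<dw * dy. \<Sum>r<ni * n. \<Sum>s<ni * n. ?u c1 c2 r s)
      = (\<Sum>r<ni * n. \<Sum>s<ni * n. l3 0 r s * kron_contract dv dw ni n x ?b 0 r s)" .
  then show ?thesis
    by (simp add: trip_eval_def pair_def mult_ac)
qed

text \<open>The quadratic form of the contraction at \<open>v\<close> is the pairing of \<open>x\<close> with the compression
  of \<open>b\<close> by the matrix of the blocks of \<open>v\<close>.\<close>
lemma kron_contract_psd:
  assumes x: "x \<in> carrier (dv * dw) ni" and b: "b \<in> carrier (dv * dw) n"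
    and pos: "\<And>V. 0 \<le> pair (dv * dw) ni (compress n ni V b) x"
  shows "kron_contract dv dw ni n x b \<in> psd (ni * n)"
proof (rule psdI[OF kron_contract_carrier[OF x b]])
  fix v :: "nat \<Rightarrow> complex"
  define V where "V p r1 = v (r1 * n + p)" for p r1
  let ?q = "kron_contract dv dw ni n x b"
  let ?t = "\<lambda>r1 r2 s1 s2 c. cnj (v (r1 * n + r2)) * (x c r1 s1 * b c r2 s2) * v (s1 * n + s2)"
  have "(\<Sum>r<ni * n. \<Sum>s<ni * n. cnj (v r) * ?q 0 r s * v s)
     = (\<Sum>r1<ni. \<Sum>r2<n. \<Sum>s1<ni. \<Sum>s2<n. \<Sum>c<dv * dw. ?t r1 r2 s1 s2 c)"
    unfolding sum_mult_index[where a = ni and b = n]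
    by (intro sum.cong refl) (simp add: kron_contract_def mult_index_less sum_distrib_left sum_distrib_right)
  also have "\<dots> = (\<Sum>r1<ni. \<Sum>s1<ni. \<Sum>r2<n. \<Sum>s2<n. \<Sum>c<dv * dw. ?t r1 r2 s1 s2 c)"
    by (rule sum.cong[OF refl], rule sum.swap)
  also have "\<dots> = (\<Sum>r1<ni. \<Sum>s1<ni. \<Sum>c<dv * dw. \<Sum>r2<n. \<Sum>s2<n. ?t r1 r2 s1 s2 c)"
    by (rule sum.cong[OF refl], rule sum.cong[OF refl], rule sum_swap_outer[symmetric])
  also have "\<dots> = (\<Sum>c<dv * dw. \<Sum>r1<ni. \<Sum>s1<ni. \<Sum>r2<n. \<Sum>s2<n. ?t r1 r2 s1 s2 c)"
    by (rule sum_swap_outer[symmetric])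
  also have "\<dots> = (\<Sum>c<dv * dw. \<Sum>r1<ni. \<Sum>s1<ni. (\<Sum>p<n. \<Sum>q<n. cnj (V p r1) * b c p q * V q s1) * x c r1 s1)"
    by (intro sum.cong refl) (simp add: V_def sum_distrib_left sum_distrib_right mult_ac)
  finally have "Re (\<Sum>r<ni * n. \<Sum>s<ni * n. cnj (v r) * ?q 0 r s * v s) = pair (dv * dw) ni (compress n ni V b) x"
    by (simp add: pair_def compress_def)
  then show "0 \<le> Re (\<Sum>i<ni * n. \<Sum>j<ni * n. cnj (v i) * ?q 0 i j * v j)"
    using pos by simp
qed

lemma xa_tensor_carrier:
  assumes x: "x \<in> carrier (dv * dw) ni" and a: "a \<in> carrier (dx * dy) n"
  shows "xa_tensor dv dw ni x dx dy n a \<in> carrier ((dv * dx) * (dw * dy)) (ni * n)"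
  by (rule carrierI)
    (auto simp: xa_tensor_def Let_def carrier_cnj[OF x, symmetric] carrier_cnj[OF a, symmetric])

lemma xa_tensor_in_cmax3:
  assumes x: "x \<in> carrier (dv * dw) ni" and a: "a \<in> carrier (dx * dy) n"
    and pos: "\<And>l1 l2 V. l1 \<in> dual_cone (dv * dx) 1 K1 \<Longrightarrow> l2 \<in> dual_cone (dw * dy) 1 K2 \<Longrightarrow>
       0 \<le> pair (dv * dw) ni (compress n ni V (curry_apply dx dy dv dw l1 l2 a)) x"
  shows "xa_tensor dv dw ni x dx dy n a \<in> cmax3 (dv * dx) K1 (dw * dy) K2 (ni * n) (psd (ni * n))"
  unfolding cmax3_def
proof (intro CollectI conjI ballI xa_tensor_carrier[OF x a])
  fix l1 l2 l3
  assume l1: "l1 \<in> dual_cone (dv * dx) 1 K1" and l2: "l2 \<in> dual_cone (dw * dy) 1 K2"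
    and l3: "l3 \<in> dual_cone 1 (ni * n) (psd (ni * n))"
  have "kron_contract dv dw ni n x (curry_apply dx dy dv dw l1 l2 a) \<in> psd (ni * n)"
    by (rule kron_contract_psd[OF x curry_apply_carrier[OF a] pos[OF l1 l2]])
  then show "0 \<le> trip_eval (dv * dx) (dw * dy) (ni * n) l1 l2 l3 (xa_tensor dv dw ni x dx dy n a)"
    using dual_cone_nonneg[OF l3] dual_cone_carrier l1 l2
    by (subst trip_eval_xa_tensor) blast+
qed

definition max_entangled_vector :: "nat \<Rightarrow> nat \<Rightarrow> nat \<Rightarrow> complex" where
  "max_entangled_vector k = (\<lambda>p q. if p div k = p mod k then 1 else 0)"

lemma sum_delta_diag:
  "(\<Sum>i1<(k::nat). \<Sum>i2<k. \<Sum>j1<k. \<Sum>j2<k. (if i1 = i2 then (if j1 = j2 then f i1 i2 j1 j2 else 0) else 0))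
   = (\<Sum>i<k. \<Sum>j<k. f i i j j)"
proof -
  have "(\<Sum>i1<k. \<Sum>i2<k. \<Sum>j1<k. \<Sum>j2<k. (if i1 = i2 then (if j1 = j2 then f i1 i2 j1 j2 else 0) else 0))
     = (\<Sum>i1<k. \<Sum>i2<k. if i1 = i2 then (\<Sum>j1<k. \<Sum>j2<k. (if j1 = j2 then f i1 i2 j1 j2 else 0)) else 0)"
    by (intro sum.cong refl) auto
  also have "\<dots> = (\<Sum>i<k. \<Sum>j1<k. \<Sum>j2<k. (if j1 = j2 then f i i j1 j2 else 0))"
    by (rule sum.cong[OF refl]) (simp add: sum_delta_less)
  also have "\<dots> = (\<Sum>i<k. \<Sum>j<k. f i i j j)"
    by (intro sum.cong refl) (simp add: sum_delta_less)
  finally show ?thesis .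
qed

lemma compress_max_entangled_vector:
  "compress (k * k) 1 (max_entangled_vector k) z c 0 0 = (\<Sum>i<k. \<Sum>j<k. z c (i * k + i) (j * k + j))"
proof -
  have "compress (k * k) 1 (max_entangled_vector k) z c 0 0 = (\<Sum>i1<k. \<Sum>i2<k. \<Sum>j1<k. \<Sum>j2<k.
      cnj (max_entangled_vector k (i1 * k + i2) 0) * z c (i1 * k + i2) (j1 * k + j2)
        * max_entangled_vector k (j1 * k + j2) 0)"
    by (simp add: compress_def sum_mult_index)
  also have "\<dots> = (\<Sum>i1<k. \<Sum>i2<k. \<Sum>j1<k. \<Sum>j2<k.
      (if i1 = i2 then (if j1 = j2 then z c (i1 * k + i2) (j1 * k + j2) else 0) else 0))"
    by (intro sum.cong refl) (simp add: max_entangled_vector_def)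
  also have "\<dots> = (\<Sum>i<k. \<Sum>j<k. z c (i * k + i) (j * k + j))"
    by (rule sum_delta_diag)
  finally show ?thesis .
qed

text \<open>Test \<open>l\<close> on the generator \<open>a \<otimes> b\<close> compressed by the maximally entangled vector.\<close>
lemma curry_matrix_dual:
  assumes l: "l \<in> dual_cone (d1 * d2) 1 (min_tp d1 A d2 B 1)" and k: "1 \<le> k"
    and a: "a \<in> A k" and b: "b \<in> B k"
  shows "0 \<le> pair d1 k a (lin_apply d2 d1 (curry_matrix d2 l) b)"
proof -
  have lC: "l \<in> carrier (d1 * d2) 1"
    using l dual_cone_carrier by blast
  let ?z = "compress (k * k) 1 (max_entangled_vector k) (tau d1 d2 k k a b)"
  have "?z \<in> min_tp d1 A d2 B 1"
    using k a b by (intro min_tp_gens_mem[where G = A and H = B])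
  then have "0 \<le> pair (d1 * d2) 1 ?z l"
    by (rule dual_cone_nonneg[OF l])
  also have "pair (d1 * d2) 1 ?z l = Re (\<Sum>c1<d1. \<Sum>c2<d2.
      (\<Sum>i<k. \<Sum>j<k. tau d1 d2 k k a b (c1 * d2 + c2) (i * k + i) (j * k + j)) * l (c1 * d2 + c2) 0 0)"
    using compress_max_entangled_vector[of k "tau d1 d2 k k a b"] by (simp add: pair_def sum_mult_index)
  also have "\<dots> = Re (\<Sum>c1<d1. \<Sum>c2<d2. \<Sum>i<k. \<Sum>j<k. a c1 i j * l (c1 * d2 + c2) 0 0 * b c2 i j)"
    by (intro arg_cong[where f = Re] sum.cong refl)
      (simp add: tau_less mult_index_less sum_distrib_left sum_distrib_right mult_ac)
  also have "\<dots> = Re (\<Sum>c1<d1. \<Sum>i<k. \<Sum>j<k. \<Sum>c2<d2. a c1 i j * l (c1 * d2 + c2) 0 0 * b c2 i j)"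
    by (rule arg_cong[where f = Re], rule sum.cong[OF refl], rule sum_swap_outer)
  also have "\<dots> = pair d1 k a (lin_apply d2 d1 (curry_matrix d2 l) b)"
    by (simp add: pair_def lin_apply_less curry_matrix_def carrier_diag_real[OF lC] sum_distrib_left mult_ac)
  finally show ?thesis .
qed

section \<open>The canonical functionals\<close>

text \<open>The identity matrix, i.e.\ the evaluation functional \<open>q \<otimes> g \<mapsto> q(g)\<close> on \<open>X' \<otimes> X\<close>.\<close>
definition identity_functional :: "nat \<Rightarrow> elt" where
  "identity_functional d = (\<lambda>c i j. if i = 0 \<and> j = 0 \<and> c < d * d \<and> c div d = c mod d then 1 else 0)"

lemma identity_functional_carrier: "identity_functional d \<in> carrier (d * d) 1"
  by (rule carrierI) (auto simp: identity_functional_def)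

lemma identity_functional_less:
  "a < d \<Longrightarrow> b < d \<Longrightarrow> identity_functional d (a * d + b) 0 0 = (if a = b then 1 else 0)"
  by (simp add: identity_functional_def mult_index_less)

lemma pair_gen_identity_functional:
  "pair (d * d) 1 (compress (k * l) 1 V (tau d d k l q g)) (identity_functional d)
   = pair d k (compress l k (\<lambda>p2 p1. V (p1 * l + p2) 0) g) q"
proof -
  let ?z = "compress (k * l) 1 V (tau d d k l q g)"
  have "pair (d * d) 1 ?z (identity_functional d) = Re (\<Sum>a<d. \<Sum>b<d. ?z (a * d + b) 0 0 * (if a = b then 1 else 0))"
    by (simp add: pair_def sum_mult_index identity_functional_less)
  also have "\<dots> = Re (\<Sum>a<d. ?z (a * d + a) 0 0)"
    by (intro arg_cong[where f = Re] sum.cong refl)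
      (simp add: if_distrib sum_delta_less cong: if_cong)
  also have "\<dots> = Re (\<Sum>a<d. \<Sum>p1<k. \<Sum>p2<l. \<Sum>p1'<k. \<Sum>p2'<l.
      cnj (V (p1 * l + p2) 0) * q a p1 p1' * g a p2 p2' * V (p1' * l + p2') 0)"
    by (intro arg_cong[where f = Re] sum.cong refl)
      (simp add: compress_def sum_mult_index tau_def mult_index_less mult_ac)
  also have "\<dots> = Re (\<Sum>a<d. \<Sum>p1<k. \<Sum>p1'<k. \<Sum>p2<l. \<Sum>p2'<l.
      cnj (V (p1 * l + p2) 0) * q a p1 p1' * g a p2 p2' * V (p1' * l + p2') 0)"
    by (rule arg_cong[where f = Re], rule sum.cong[OF refl], rule sum.cong[OF refl], rule sum.swap)
  also have "\<dots> = pair d k (compress l k (\<lambda>p2 p1. V (p1 * l + p2) 0) g) q"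
    by (simp add: pair_def compress_def sum_distrib_left sum_distrib_right mult_ac)
  finally show ?thesis .
qed

lemma identity_functional_dual:
  assumes G: "aos d G"
  shows "identity_functional d \<in> dual_cone (d * d) 1 (min_tp d (dual_sys d G) d G 1)"
proof (rule dual_coneI[OF identity_functional_carrier])
  fix z assume z: "z \<in> min_tp d (dual_sys d G) d G 1"
  show "0 \<le> pair (d * d) 1 z (identity_functional d)"
  proof (rule cc_hull_halfspace)
    show "min_tp_gens d (dual_sys d G) d G 1 \<subseteq> carrier (d * d) 1"
      using aos_carrier[OF G] by (intro min_tp_gens_carrier dual_sys_carrier)
    show "z \<in> cc_hull (d * d) 1 (min_tp_gens d (dual_sys d G) d G 1)"
      using z by (simp add: min_tp_cc_hull_gens)
  next
    fix s assume "s \<in> min_tp_gens d (dual_sys d G) d G 1"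
    then obtain k l q g V where s: "s = compress (k * l) 1 V (tau d d k l q g)" and kl: "1 \<le> k" "1 \<le> l"
      and q: "q \<in> dual_sys d G k" and g: "g \<in> G l"
      unfolding min_tp_gens_def by blast
    have "compress l k (\<lambda>p2 p1. V (p1 * l + p2) 0) g \<in> G k"
      using G kl g by (intro aos_compress)
    then have "0 \<le> pair d k (compress l k (\<lambda>p2 p1. V (p1 * l + p2) 0) g) q"
      using q unfolding dual_sys_def by (rule dual_cone_nonneg[rotated])
    then show "0 \<le> pair (d * d) 1 s (identity_functional d)"
      by (simp only: s pair_gen_identity_functional)
  qed
qed

lemma curry_apply_identity:
  assumes a: "a \<in> carrier (dx * dy) n"
  shows "curry_apply dx dy dx dy (identity_functional dx) (identity_functional dy) a = a"
proof (rule carrier_eqI[OF curry_apply_carrier[OF a] a])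
  fix c i j assume c: "c < dx * dy" "i < n" "j < n"
  define kv kw where "kv = c div dy" and "kw = c mod dy"
  have c_eq: "c = kv * dy + kw"
    by (simp add: kv_def kw_def)
  have kv: "kv < dx"
    using c(1) by (simp add: kv_def less_mult_imp_div_less)
  have kw: "kw < dy"
    using c(1) by (simp add: kw_def) (metis mod_less_divisor mult_zero_right neq0_conv not_less0)
  have "curry_apply dx dy dx dy (identity_functional dx) (identity_functional dy) a (kv * dy + kw) i j
      = (\<Sum>kx<dx. \<Sum>ky<dy. identity_functional dx (kv * dx + kx) 0 0 * identity_functional dy (kw * dy + ky) 0 0
          * a (kx * dy + ky) i j)"
    by (rule curry_apply_less[OF identity_functional_carrier identity_functional_carrier kv kw])
  also have "\<dots> = (\<Sum>kx<dx. \<Sum>ky<dy. if kv = kx then (if kw = ky then a (kx * dy + ky) i j else 0) else 0)"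
    using kv kw by (intro sum.cong refl) (auto simp: identity_functional_less)
  also have "\<dots> = a (kv * dy + kw) i j"
    by (rule sum_delta_less2[OF kv kw])
  finally show "curry_apply dx dy dx dy (identity_functional dx) (identity_functional dy) a c i j = a c i j"
    by (simp only: c_eq)
qed

text \<open>The maximally entangled state \<open>\<Sum>\<^sub>i\<^sub>j e\<^sub>i\<^sub>j \<otimes> e\<^sub>i\<^sub>j\<close> as a functional on \<open>Her\<^sub>n\<^sub>n\<close>.\<close>
definition max_entangled_functional :: "nat \<Rightarrow> elt" where
  "max_entangled_functional n = (\<lambda>k r s. if k = 0 \<and> r < n * n \<and> s < n * n \<and>
      r div n = r mod n \<and> s div n = s mod n then 1 else 0)"

lemma max_entangled_functional_carrier: "max_entangled_functional n \<in> carrier 1 (n * n)"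
  by (rule carrierI) (auto simp: max_entangled_functional_def)

lemma pair_max_entangled_functional:
  "pair 1 (n * n) P (max_entangled_functional n) = Re (\<Sum>i<n. \<Sum>j<n. P 0 (i * n + i) (j * n + j))"
proof -
  have "pair 1 (n * n) P (max_entangled_functional n) = Re (\<Sum>i1<n. \<Sum>i2<n. \<Sum>j1<n. \<Sum>j2<n.
      (if i1 = i2 then (if j1 = j2 then P 0 (i1 * n + i2) (j1 * n + j2) else 0) else 0))"
    unfolding pair_one_dim sum_mult_index
    by (intro arg_cong[where f = Re] sum.cong refl)
      (simp add: max_entangled_functional_def mult_index_less)
  then show ?thesis
    by (simp only: sum_delta_diag)
qed

lemma max_entangled_functional_dual:
  "max_entangled_functional n \<in> dual_cone 1 (n * n) (psd (n * n))"
proof (rule dual_coneI[OF max_entangled_functional_carrier])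
  fix P assume "P \<in> psd (n * n)"
  then have "0 \<le> Re (\<Sum>r<n * n. \<Sum>s<n * n. cnj (max_entangled_vector n r 0) * P 0 r s * max_entangled_vector n s 0)"
    by (rule psdD)
  also have "(\<Sum>r<n * n. \<Sum>s<n * n. cnj (max_entangled_vector n r 0) * P 0 r s * max_entangled_vector n s 0)
      = (\<Sum>i<n. \<Sum>j<n. P 0 (i * n + i) (j * n + j))"
    using compress_max_entangled_vector[of n P 0] by (simp add: compress_def)
  finally show "0 \<le> pair 1 (n * n) P (max_entangled_functional n)"
    by (simp only: pair_max_entangled_functional)
qed

lemma pair_kron_contract_max_entangled:
  "pair 1 (n * n) (kron_contract dx dy n n w a) (max_entangled_functional n) = pair (dx * dy) n a w"
proof -
  have "pair 1 (n * n) (kron_contract dx dy n n w a) (max_entangled_functional n)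
      = Re (\<Sum>i<n. \<Sum>j<n. \<Sum>c<dx * dy. w c i j * a c i j)"
    unfolding pair_max_entangled_functional
    by (intro arg_cong[where f = Re] sum.cong refl) (simp add: kron_contract_def mult_index_less)
  also have "\<dots> = Re (\<Sum>c<dx * dy. \<Sum>i<n. \<Sum>j<n. w c i j * a c i j)"
    by (rule arg_cong[where f = Re], rule sum_swap_outer[symmetric])
  also have "\<dots> = pair (dx * dy) n a w"
    by (simp add: pair_def mult.commute)
  finally show ?thesis .
qed

section \<open>Functorial tensor products\<close>

lemma functorial_tp_aos: "functorial_tp T \<Longrightarrow> aos d G \<Longrightarrow> aos e H \<Longrightarrow> aos (d * e) (T d G e H)"
  unfolding functorial_tp_def by blast

lemma functorial_tp_cp_map:
  "functorial_tp T \<Longrightarrow> aos d1 G1 \<Longrightarrow> aos d2 G2 \<Longrightarrow> aos e1 H1 \<Longrightarrow> aos e2 H2 \<Longrightarrow>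
   cp_map d1 G1 d2 G2 M \<Longrightarrow> cp_map e1 H1 e2 H2 N \<Longrightarrow>
   cp_map (d1 * e1) (T d1 G1 e1 H1) (d2 * e2) (T d2 G2 e2 H2) (kron_lin e1 e2 M N)"
  unfolding functorial_tp_def by blast

lemma curry_matrix_into_dual_sys:
  assumes "l \<in> dual_cone (d1 * d2) 1 (min_tp d1 A d2 B 1)" "1 \<le> k" "b \<in> B k" "b \<in> carrier d2 k"
  shows "lin_apply d2 d1 (curry_matrix d2 l) b \<in> dual_sys d1 A k"
  unfolding dual_sys_def
  using assms curry_matrix_dual lin_apply_carrier by (blast intro: dual_coneI)

lemma curry_matrix_cp_map:
  assumes G: "aos d G" and G': "aos d' G'" and l: "l \<in> dual_cone (d * d') 1 (min_tp d (dual_sys d G) d' G' 1)"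
  shows "cp_map d' G' d G (curry_matrix d' l)"
  unfolding cp_map_def
proof (intro allI impI ballI)
  fix k g assume k: "1 \<le> k" and g: "g \<in> G' k"
  have "lin_apply d' d (curry_matrix d' l) g \<in> dual_sys d (dual_sys d G) k"
    using aos_carrier[OF G' k] g by (intro curry_matrix_into_dual_sys[OF l k]) auto
  then show "lin_apply d' d (curry_matrix d' l) g \<in> G k"
    by (simp add: dual_sys_def aos_dual_dual[OF G k])
qed

text \<open>The sign \<open>\<epsilon>\<close> with \<open>\<epsilon> \<cdot> 1 \<in> (\<real> \<otimes> \<real>)(1)\<close>: this cone is proper in the line \<open>\<real>\<close>, so it
  is one of the two half-lines.\<close>
lemma functorial_tp_unit_sign:
  assumes T: "functorial_tp T"
  obtains \<epsilon> :: real where "\<epsilon> = 1 \<or> \<epsilon> = -1" "zscale \<epsilon> zone \<in> T 1 scalar_osys 1 scalar_osys 1"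
proof -
  let ?K = "T 1 scalar_osys 1 scalar_osys 1"
  have P: "proper_cone 1 ?K"
    using aos_proper_cone[OF functorial_tp_aos[OF T scalar_osys_aos scalar_osys_aos]] by simp
  obtain z0 e where z0: "z0 \<in> ?K" and e: "e > 0"
    and ball: "\<And>u. u \<in> carrier 1 1 \<Longrightarrow> (\<Sum>k<1. cmod (u k 0 0 - z0 k 0 0)) < e \<Longrightarrow> u \<in> ?K"
    using P unfolding proper_cone_def by blast
  have z0C: "z0 \<in> carrier 1 1"
    using P z0 unfolding proper_cone_def by blast
  define s :: real where "s = (if 0 \<le> Re (z0 0 0 0) then 1 else -1)"
  define c where "c = Re (z0 0 0 0) + s * e / 2"
  have u: "zadd z0 (zscale (s * e / 2) zone) = zscale c zone"
    using carrier_diag_real[OF z0C, of 0 0]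
    by (intro carrier_eqI[OF zadd_carrier[OF z0C zscale_carrier[OF zone_carrier]] zscale_carrier[OF zone_carrier]])
      (auto simp: zadd_def zscale_def zone_def c_def)
  have "zadd z0 (zscale (s * e / 2) zone) \<in> ?K"
    using e by (intro ball zadd_carrier zscale_carrier z0C zone_carrier)
      (simp add: zadd_def zscale_def zone_def norm_mult s_def)
  then have "zscale (1 / \<bar>c\<bar>) (zscale c zone) \<in> ?K"
    unfolding u using P unfolding proper_cone_def by (simp add: cvx_cone_zscale)
  moreover have "zscale (1 / \<bar>c\<bar>) (zscale c zone) = zscale (c / \<bar>c\<bar>) zone"
    by (intro ext) (simp add: zscale_def)
  moreover have "c \<noteq> 0"
    using e by (cases "0 \<le> Re (z0 0 0 0)") (auto simp: c_def s_def)
  then have "c / \<bar>c\<bar> = 1 \<or> c / \<bar>c\<bar> = -1"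
    by (cases "0 < c") auto
  ultimately show ?thesis
    using that by metis
qed

text \<open>Functoriality applied to the maps \<open>\<real> \<rightarrow> G\<close>, \<open>\<real> \<rightarrow> H\<close> sending \<open>1\<close> to \<open>g\<close> and \<open>h\<close>.\<close>
lemma functorial_tp_product_mem:
  assumes T: "functorial_tp T" and \<epsilon>: "zscale \<epsilon> zone \<in> T 1 scalar_osys 1 scalar_osys 1"
    and G: "aos dx G" and H: "aos dy H" and g: "g \<in> G 1" and h: "h \<in> H 1" and n: "1 \<le> n"
  shows "zscale \<epsilon> (compress 1 n V (tau dx dy 1 1 g h)) \<in> T dx G dy H n"
proof -
  have gC: "g \<in> carrier dx 1" and hC: "h \<in> carrier dy 1"
    using aos_carrier[OF G, of 1] aos_carrier[OF H, of 1] g h by auto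
  let ?M = "kron_lin 1 dy (\<lambda>k _. Re (g k 0 0)) (\<lambda>k _. Re (h k 0 0))"
  have "compress 1 n V (zscale \<epsilon> zone) \<in> T 1 scalar_osys 1 scalar_osys n"
    using aos_compress[OF functorial_tp_aos[OF T scalar_osys_aos scalar_osys_aos] _ n \<epsilon>] by simp
  then have "lin_apply (1 * 1) (dx * dy) ?M (compress 1 n V (zscale \<epsilon> zone)) \<in> T dx G dy H n"
    using functorial_tp_cp_map[OF T scalar_osys_aos G scalar_osys_aos H
        scalar_osys_cp_map[OF G g] scalar_osys_cp_map[OF H h]] n
    unfolding cp_map_def by blast
  moreover have "lin_apply (1 * 1) (dx * dy) ?M (compress 1 n V (zscale \<epsilon> zone))
      = zscale \<epsilon> (compress 1 n V (tau dx dy 1 1 g h))"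
  proof (intro ext)
    fix c i j
    show "lin_apply (1 * 1) (dx * dy) ?M (compress 1 n V (zscale \<epsilon> zone)) c i j
      = zscale \<epsilon> (compress 1 n V (tau dx dy 1 1 g h)) c i j"
      by (cases "c < dx * dy")
        (auto simp: lin_apply_def kron_lin_def compress_def zscale_def zone_def tau_def
          carrier_diag_real[OF gC] carrier_diag_real[OF hC] mult_ac)
  qed
  ultimately show ?thesis by simp
qed

text \<open>\<open>(l\<^sub>1 \<otimes> l\<^sub>2 \<otimes> id)(w) \<in> Her\<^sub>n\<close> for functionals \<open>l\<^sub>1\<close> on \<open>X\<close> and \<open>l\<^sub>2\<close> on \<open>Y\<close>.\<close>
definition partial_pair :: "nat \<Rightarrow> nat \<Rightarrow> nat \<Rightarrow> elt \<Rightarrow> elt \<Rightarrow> elt \<Rightarrow> elt" where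
  "partial_pair dx dy n l1 l2 w = (\<lambda>k i j. if k = 0 \<and> i < n \<and> j < n then
     (\<Sum>c<dx * dy. l1 (c div dy) 0 0 * l2 (c mod dy) 0 0 * w c i j) else 0)"

lemma trip_eval_partial_pair: "trip_eval dx dy n l1 l2 l3 w = pair 1 n (partial_pair dx dy n l1 l2 w) l3"
proof -
  let ?t = "\<lambda>k1 k2 i j. l1 k1 0 0 * l2 k2 0 0 * l3 0 i j * w (k1 * dy + k2) i j"
  have "(\<Sum>k1<dx. \<Sum>k2<dy. \<Sum>i<n. \<Sum>j<n. ?t k1 k2 i j) = (\<Sum>k1<dx. \<Sum>i<n. \<Sum>j<n. \<Sum>k2<dy. ?t k1 k2 i j)"
    by (rule sum.cong[OF refl], rule sum_swap_outer)
  also have "\<dots> = (\<Sum>i<n. \<Sum>j<n. \<Sum>k1<dx. \<Sum>k2<dy. ?t k1 k2 i j)"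
    by (rule sum_swap_outer)
  also have "\<dots> = (\<Sum>i<n. \<Sum>j<n. partial_pair dx dy n l1 l2 w 0 i j * l3 0 i j)"
    by (intro sum.cong refl) (simp add: partial_pair_def sum_mult_index sum_distrib_left sum_distrib_right mult_ac)
  finally show ?thesis
    unfolding trip_eval_def pair_one_dim by simp
qed

lemma partial_pair_carrier:
  assumes "l1 \<in> carrier dx 1" "l2 \<in> carrier dy 1" "w \<in> carrier (dx * dy) n"
  shows "partial_pair dx dy n l1 l2 w \<in> carrier 1 n"
proof (rule carrierI)
  fix k i j :: nat
  have "cnj (l1 c 0 0) = l1 c 0 0" "cnj (l2 c 0 0) = l2 c 0 0" for c
    using carrier_cnj[OF assms(1), of c 0 0] carrier_cnj[OF assms(2), of c 0 0] by simp_all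
  then show "partial_pair dx dy n l1 l2 w k j i = cnj (partial_pair dx dy n l1 l2 w k i j)"
    by (auto simp: partial_pair_def cnj_sum carrier_cnj[OF assms(3), symmetric])
qed (auto simp: partial_pair_def)

lemma partial_pair_quadratic_form:
  "Re (\<Sum>i<n. \<Sum>j<n. cnj (v i) * partial_pair dx dy n l1 l2 w 0 i j * v j)
   = pair (dx * dy) n (compress 1 n (\<lambda>_ j. v j) (tau dx dy 1 1 l1 l2)) w"
proof -
  let ?t = "\<lambda>c i j. cnj (v i) * (l1 (c div dy) 0 0 * l2 (c mod dy) 0 0) * v j * w c i j"
  have "(\<Sum>i<n. \<Sum>j<n. cnj (v i) * partial_pair dx dy n l1 l2 w 0 i j * v j) = (\<Sum>i<n. \<Sum>j<n. \<Sum>c<dx * dy. ?t c i j)"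
    by (intro sum.cong refl) (simp add: partial_pair_def sum_distrib_left sum_distrib_right mult_ac)
  also have "\<dots> = (\<Sum>c<dx * dy. \<Sum>i<n. \<Sum>j<n. ?t c i j)"
    by (rule sum_swap_outer[symmetric])
  finally show ?thesis
    by (simp add: pair_def compress_def tau_def)
qed

text \<open>With the sign \<open>\<epsilon>\<close> of \<open>functorial_tp_unit_sign\<close>, the matrix \<open>\<epsilon> (l\<^sub>1 \<otimes> l\<^sub>2 \<otimes> id)(w)\<close> is
  positive semidefinite for \<open>l\<^sub>1 \<in> G(1)\<close>, \<open>l\<^sub>2 \<in> H(1)\<close>.\<close>
lemma dual_element_in_pm_cmax3:
  assumes T: "functorial_tp T" and G: "aos dx G" and H: "aos dy H" and n: "1 \<le> n"
    and w: "w \<in> dual_cone (dx * dy) n (T dx G dy H n)"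
  shows "w \<in> pm (cmax3 dx (dual_sys dx G 1) dy (dual_sys dy H 1) n (psd n))"
proof -
  obtain \<epsilon> :: real where \<epsilon>: "\<epsilon> = 1 \<or> \<epsilon> = -1" "zscale \<epsilon> zone \<in> T 1 scalar_osys 1 scalar_osys 1"
    using functorial_tp_unit_sign[OF T] by blast
  have wC: "w \<in> carrier (dx * dy) n"
    using w dual_cone_carrier by blast
  have "0 \<le> trip_eval dx dy n l1 l2 l3 (zscale \<epsilon> w)"
    if l1: "l1 \<in> dual_cone dx 1 (dual_sys dx G 1)" and l2: "l2 \<in> dual_cone dy 1 (dual_sys dy H 1)"
      and l3: "l3 \<in> dual_cone 1 n (psd n)" for l1 l2 l3
  proof -
    have l1G: "l1 \<in> G 1" and l2H: "l2 \<in> H 1"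
      using l1 l2 by (simp_all add: dual_sys_def aos_dual_dual[OF G] aos_dual_dual[OF H])
    have l1C: "l1 \<in> carrier dx 1" and l2C: "l2 \<in> carrier dy 1"
      using l1 l2 dual_cone_carrier by blast+
    let ?P = "partial_pair dx dy n l1 l2 (zscale \<epsilon> w)"
    have "?P \<in> psd n"
    proof (rule psdI[OF partial_pair_carrier[OF l1C l2C zscale_carrier[OF wC]]])
      fix v :: "nat \<Rightarrow> complex"
      have "zscale \<epsilon> (compress 1 n (\<lambda>_ j. v j) (tau dx dy 1 1 l1 l2)) \<in> T dx G dy H n"
        by (rule functorial_tp_product_mem[OF T \<epsilon>(2) G H l1G l2H n])
      then have "0 \<le> pair (dx * dy) n (zscale \<epsilon> (compress 1 n (\<lambda>_ j. v j) (tau dx dy 1 1 l1 l2))) w"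
        by (rule dual_cone_nonneg[OF w])
      then have "0 \<le> pair (dx * dy) n (compress 1 n (\<lambda>_ j. v j) (tau dx dy 1 1 l1 l2)) (zscale \<epsilon> w)"
        by (simp only: pair_zscale_left pair_zscale_right)
      then show "0 \<le> Re (\<Sum>i<n. \<Sum>j<n. cnj (v i) * ?P 0 i j * v j)"
        by (simp only: partial_pair_quadratic_form)
    qed
    then show ?thesis
      using dual_cone_nonneg[OF l3] by (simp add: trip_eval_partial_pair)
  qed
  then have "zscale \<epsilon> w \<in> cmax3 dx (dual_sys dx G 1) dy (dual_sys dy H 1) n (psd n)"
    unfolding cmax3_def using zscale_carrier[OF wC] by blast
  moreover have "w = zscale \<epsilon> w \<or> w = zneg (zscale \<epsilon> w)"
    using \<epsilon>(1) by (auto simp: zscale_def zneg_def)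
  ultimately show ?thesis
    unfolding pm_def by (metis UnI1 UnI2 image_eqI)
qed

lemma functorial_tp_xa_tensor_in_cmax3:
  assumes T: "functorial_tp T" and G: "aos dx G" and H: "aos dy H"
    and w: "w \<in> dual_cone (dx * dy) n (T dx G dy H n)" and n: "1 \<le> n"
    and G': "aos dx' G'" and H': "aos dy' H'" and n': "1 \<le> n'" and a: "a \<in> T dx' G' dy' H' n'"
  shows "xa_tensor dx dy n w dx' dy' n' a \<in> cmax3 (dx * dx') (min_tp dx (dual_sys dx G) dx' G' 1)
     (dy * dy') (min_tp dy (dual_sys dy H) dy' H' 1) (n * n') (psd (n * n'))"
proof (rule xa_tensor_in_cmax3)
  show "w \<in> carrier (dx * dy) n"
    using w dual_cone_carrier by blast
  show "a \<in> carrier (dx' * dy') n'"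
    using aos_carrier[OF functorial_tp_aos[OF T G' H'] n'] a by blast
  fix l1 l2 V
  assume l1: "l1 \<in> dual_cone (dx * dx') 1 (min_tp dx (dual_sys dx G) dx' G' 1)"
    and l2: "l2 \<in> dual_cone (dy * dy') 1 (min_tp dy (dual_sys dy H) dy' H' 1)"
  have "curry_apply dx' dy' dx dy l1 l2 a \<in> T dx G dy H n'"
    using functorial_tp_cp_map[OF T G' G H' H curry_matrix_cp_map[OF G G' l1] curry_matrix_cp_map[OF H H' l2]]
      a n' unfolding cp_map_def curry_apply_def by blast
  then have "compress n' n V (curry_apply dx' dy' dx dy l1 l2 a) \<in> T dx G dy H n"
    by (rule aos_compress[OF functorial_tp_aos[OF T G H] n' n])
  then show "0 \<le> pair (dx * dy) n (compress n' n V (curry_apply dx' dy' dx dy l1 l2 a)) w"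
    by (rule dual_cone_nonneg[OF w])
qed

text \<open>The identity functionals turn the triple maximal cone condition into \<open>0 \<le> \<langle>a, w\<rangle>\<close>.\<close>
lemma functorial_tp_separating_dual_element:
  assumes T: "functorial_tp T" and G: "aos dx G" and H: "aos dy H" and n: "1 \<le> n"
    and aC: "a \<in> carrier (dx * dy) n" and a: "a \<notin> T dx G dy H n"
  obtains w where "w \<in> dual_cone (dx * dy) n (T dx G dy H n)"
    "xa_tensor dx dy n w dx dy n a \<notin> cmax3 (dx * dx) (min_tp dx (dual_sys dx G) dx G 1)
       (dy * dy) (min_tp dy (dual_sys dy H) dy H 1) (n * n) (psd (n * n))"
proof -
  have A: "aos (dx * dy) (T dx G dy H)"
    by (rule functorial_tp_aos[OF T G H])
  obtain w where w: "w \<in> dual_cone (dx * dy) n (T dx G dy H n)" and neg: "pair (dx * dy) n a w < 0"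
    by (rule closed_cone_separation[OF aos_carrier[OF A n] aos_cvx_cone[OF A n] aos_seq_closed[OF A n] aC a])
  have "trip_eval (dx * dx) (dy * dy) (n * n) (identity_functional dx) (identity_functional dy)
      (max_entangled_functional n) (xa_tensor dx dy n w dx dy n a) = pair (dx * dy) n a w"
    by (simp only: trip_eval_xa_tensor[OF identity_functional_carrier identity_functional_carrier]
        curry_apply_identity[OF aC] pair_kron_contract_max_entangled)
  then have "xa_tensor dx dy n w dx dy n a \<notin> cmax3 (dx * dx) (min_tp dx (dual_sys dx G) dx G 1)
       (dy * dy) (min_tp dy (dual_sys dy H) dy H 1) (n * n) (psd (n * n))"
    using neg identity_functional_dual[OF G] identity_functional_dual[OF H] max_entangled_functional_dual
    unfolding cmax3_def by fastforce
  then show ?thesis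
    using that w by blast
qed

lemma min_tp_xa_tensor_in_cmax3:
  assumes D: "aos dv D" and E: "aos dw E" and x: "x \<in> max_tp dv D dw E ni"
    and G: "aos dx G" and H: "aos dy H" and a: "a \<in> min_tp dx G dy H n"
  shows "xa_tensor dv dw ni x dx dy n a \<in>
     cmax3 (dv * dx) (min_tp dv D dx G 1) (dw * dy) (min_tp dw E dy H 1) (ni * n) (psd (ni * n))"
proof (rule xa_tensor_in_cmax3)
  have x_dual: "x \<in> dual_cone (dv * dw) ni (min_tp dv (dual_sys dv D) dw (dual_sys dw E) ni)"
    using x by (simp add: max_tp_def dual_sys_def)
  then show "x \<in> carrier (dv * dw) ni"
    using dual_cone_carrier by blast
  show "a \<in> carrier (dx * dy) n"
    using min_tp_carrier[OF aos_carrier[OF G] aos_carrier[OF H]] a by blast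
  fix l1 l2 V
  assume l1: "l1 \<in> dual_cone (dv * dx) 1 (min_tp dv D dx G 1)"
    and l2: "l2 \<in> dual_cone (dw * dy) 1 (min_tp dw E dy H 1)"
  have "curry_apply dx dy dv dw l1 l2 a \<in> min_tp dv (dual_sys dv D) dw (dual_sys dw E) n"
    unfolding curry_apply_def
    by (rule min_tp_lin_apply[OF aos_carrier[OF G] aos_carrier[OF H] curry_matrix_into_dual_sys[OF l1]
          curry_matrix_into_dual_sys[OF l2] a])
      (use aos_carrier[OF G] aos_carrier[OF H] in blast)+
  then have "compress n ni V (curry_apply dx dy dv dw l1 l2 a) \<in> min_tp dv (dual_sys dv D) dw (dual_sys dw E) ni"
    by (rule min_tp_compress[OF dual_sys_carrier dual_sys_carrier])
  then show "0 \<le> pair (dv * dw) ni (compress n ni V (curry_apply dx dy dv dw l1 l2 a)) x"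
    by (rule dual_cone_nonneg[OF x_dual])
qed

definition tp_witnesses :: "(nat \<Rightarrow> osys \<Rightarrow> nat \<Rightarrow> osys \<Rightarrow> osys) \<Rightarrow> (nat \<times> osys \<times> nat \<times> osys \<times> nat \<times> elt) set" where
  "tp_witnesses T = {(dx, dual_sys dx G, dy, dual_sys dy H, n, w) | dx G dy H n w.
     aos dx G \<and> aos dy H \<and> 1 \<le> n \<and> w \<in> dual_cone (dx * dy) n (T dx G dy H n)}"

lemma tp_witnesses_pm_cmax3:
  assumes "functorial_tp T"
  shows "\<forall>(dv, D, dw, E, ni, x) \<in> tp_witnesses T.
    aos dv D \<and> aos dw E \<and> 1 \<le> ni \<and> x \<in> pm (cmax3 dv (D 1) dw (E 1) ni (psd ni))"
  unfolding tp_witnesses_def using dual_sys_aos dual_element_in_pm_cmax3[OF assms] by fastforce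

lemma functorial_tp_iff_tp_witnesses:
  assumes T: "functorial_tp T" and G: "aos dx G" and H: "aos dy H" and n: "1 \<le> n"
    and aC: "a \<in> carrier (dx * dy) n"
  shows "a \<in> T dx G dy H n \<longleftrightarrow> (\<forall>(dv, D, dw, E, ni, x) \<in> tp_witnesses T.
      xa_tensor dv dw ni x dx dy n a \<in>
        cmax3 (dv * dx) (min_tp dv D dx G 1) (dw * dy) (min_tp dw E dy H 1) (ni * n) (psd (ni * n)))"
    (is "_ \<longleftrightarrow> (\<forall>(dv, D, dw, E, ni, x) \<in> _. ?in dv D dw E ni x)")
proof
  assume "a \<in> T dx G dy H n"
  then show "\<forall>(dv, D, dw, E, ni, x) \<in> tp_witnesses T. ?in dv D dw E ni x"
    unfolding tp_witnesses_def using functorial_tp_xa_tensor_in_cmax3[OF T _ _ _ _ G H n] by fastforce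
next
  assume all: "\<forall>(dv, D, dw, E, ni, x) \<in> tp_witnesses T. ?in dv D dw E ni x"
  show "a \<in> T dx G dy H n"
  proof (rule ccontr)
    assume "a \<notin> T dx G dy H n"
    then obtain w where w: "w \<in> dual_cone (dx * dy) n (T dx G dy H n)"
      and "\<not> ?in dx (dual_sys dx G) dy (dual_sys dy H) n w"
      by (rule functorial_tp_separating_dual_element[OF T G H n aC])
    moreover have "(dx, dual_sys dx G, dy, dual_sys dy H, n, w) \<in> tp_witnesses T"
      unfolding tp_witnesses_def using G H n w by blast
    ultimately show False
      using all by fastforce
  qed
qed

theorem corollary4p3:
  fixes T :: "nat \<Rightarrow> osys \<Rightarrow> nat \<Rightarrow> osys \<Rightarrow> osys"
  assumes "functorial_tp T"
  shows "(\<exists>S :: (nat \<times> osys \<times> nat \<times> osys \<times> nat \<times> elt) set.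
            (\<forall>(dv, D, dw, E, ni, x) \<in> S. aos dv D \<and> aos dw E \<and> 1 \<le> ni \<and>
                 x \<in> pm (cmax3 dv (D 1) dw (E 1) ni (psd ni)))
          \<and> (\<forall>dx G dy H n a. aos dx G \<longrightarrow> aos dy H \<longrightarrow> 1 \<le> n \<longrightarrow> a \<in> carrier (dx * dy) n \<longrightarrow>
               (a \<in> T dx G dy H n \<longleftrightarrow>
                 (\<forall>(dv, D, dw, E, ni, x) \<in> S.
                    xa_tensor dv dw ni x dx dy n a \<in>
                      cmax3 (dv * dx) (min_tp dv D dx G 1) (dw * dy) (min_tp dw E dy H 1)
                            (ni * n) (psd (ni * n))))))
       \<and> (\<forall>dv D dw E ni x. aos dv D \<longrightarrow> aos dw E \<longrightarrow> 1 \<le> ni \<longrightarrow> x \<in> max_tp dv D dw E ni \<longrightarrow>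
            (\<forall>dx G dy H n a. aos dx G \<longrightarrow> aos dy H \<longrightarrow> 1 \<le> n \<longrightarrow> a \<in> min_tp dx G dy H n \<longrightarrow>
               xa_tensor dv dw ni x dx dy n a \<in>
                 cmax3 (dv * dx) (min_tp dv D dx G 1) (dw * dy) (min_tp dw E dy H 1)
                       (ni * n) (psd (ni * n))))"
  using tp_witnesses_pm_cmax3[OF assms] functorial_tp_iff_tp_witnesses[OF assms]
    min_tp_xa_tensor_in_cmax3
  by blast

end
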